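(* If $G$ is a finite directed acyclic graph, then $\mathrm{DT}(G)$ is homotopy equivalent to a wedge of $\prod_{v\in V(G)\setminus R}(d^-(v)-1)$ spheres of dimension $\#V(G)-\#R-1$, where $R$ is the set of vertices of $G$ without edges directed to them.
   Context: A directed acyclic graph has no directed cycles. A directed forest is a set of edges which, as a graph, is acyclic with at most one edge directed to each vertex. $\mathrm{DT}(G)$ is the simplicial complex with vertex set $E(G)$ whose simplices are the directed forests. $d^-(v)$ denotes the number of edges of $G$ directed to $v$. A wedge of zero spheres means a point (contractible). *)

theory Defs
  imports "HOL-Analysis.Analysis"
begin

definition edge_rel :: "('e \<Rightarrow> 'v) \<Rightarrow> ('e \<Rightarrow> 'v) \<Rightarrow> 'e set \<Rightarrow> ('v \<times> 'v) set" where
  "edge_rel src tgt F = {(src e, tgt e) | e. e \<in> F}"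

definition finite_dag :: "'v set \<Rightarrow> 'e set \<Rightarrow> ('e \<Rightarrow> 'v) \<Rightarrow> ('e \<Rightarrow> 'v) \<Rightarrow> bool" where
  "finite_dag V E src tgt \<longleftrightarrow> finite V \<and> finite E \<and>
     (\<forall>e\<in>E. src e \<in> V \<and> tgt e \<in> V) \<and> acyclic (edge_rel src tgt E)"

definition indeg :: "'e set \<Rightarrow> ('e \<Rightarrow> 'v) \<Rightarrow> 'v \<Rightarrow> nat" where
  "indeg E tgt v = card {e \<in> E. tgt e = v}"

definition directed_forest :: "'e set \<Rightarrow> ('e \<Rightarrow> 'v) \<Rightarrow> ('e \<Rightarrow> 'v) \<Rightarrow> 'e set \<Rightarrow> bool" where
  "directed_forest E src tgt F \<longleftrightarrow> F \<subseteq> E \<and> acyclic (edge_rel src tgt F) \<and>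
     (\<forall>v. card {e \<in> F. tgt e = v} \<le> 1)"

definition DT :: "'e set \<Rightarrow> ('e \<Rightarrow> 'v) \<Rightarrow> ('e \<Rightarrow> 'v) \<Rightarrow> 'e set set" where
  "DT E src tgt = {F. directed_forest E src tgt F}"

text \<open>Geometric realization of a finite abstract simplicial complex K on vertex set
  'e: barycentric coordinate functions whose support is a simplex, with the
  product (= Euclidean, as everything is finite) topology.\<close>
definition geom_realization :: "'e set set \<Rightarrow> ('e \<Rightarrow> real) topology" where
  "geom_realization K = subtopology (product_topology (\<lambda>_. euclideanreal) UNIV)
     {f. (\<forall>e. 0 \<le> f e) \<and> {e. f e \<noteq> 0} \<in> K \<and> finite {e. f e \<noteq> 0} \<and> sum f {e. f e \<noteq> 0} = 1}"

text \<open>Wedge of n spheres of dimension d (d \<ge> -1), modelled in nat \<Rightarrow> real: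
  the i-th sphere is the unit sphere in the coordinate block
  [i(d+1), (i+1)(d+1)) centred at the first basis vector of that block, so all
  spheres pass through the origin (the wedge point).  The wedge of zero spheres
  is a point.  For d = -1 the (-1)-sphere is empty: the wedge of n \<ge> 1 copies is
  empty, of 0 copies a point.\<close>
definition wedge_spheres_set :: "nat \<Rightarrow> int \<Rightarrow> (nat \<Rightarrow> real) set" where
  "wedge_spheres_set n d =
    (if d < 0 then (if n = 0 then {\<lambda>_. 0} else {})
     else insert (\<lambda>_. 0)
       {x. \<exists>i<n. let m = nat d + 1 in
            (\<forall>j. j \<notin> {i*m..<(i+1)*m} \<longrightarrow> x j = 0) \<and>
            (x (i*m) - 1)^2 + (\<Sum>j\<in>{i*m<..<(i+1)*m}. (x j)^2) = 1})"

definition wedge_spheres :: "nat \<Rightarrow> int \<Rightarrow> (nat \<Rightarrow> real) topology" where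
  "wedge_spheres n d = subtopology (product_topology (\<lambda>_. euclideanreal) UNIV) (wedge_spheres_set n d)"

end

theory Submission
  imports Defs
begin

text \<open>Since G is acyclic, every set of edges is acyclic, so the directed forests are exactly
  the edge sets with at most one edge into each vertex: DT(G) is the join of the discrete sets
  D(v) of edges into v, over the set U of vertices of positive in-degree.  Fix a base edge a(v)
  in each D(v).  A point of the realization is described by a point s of the l1-unit sphere
  of R^U (the join of the two-point sets), where s(v) < 0 is weight on a(v) and s(v) > 0 is
  weight on some other edge into v, together with the choice of these other edges.  Removing
  the open top simplices that avoid all base edges leaves a contractible complex, so collapsing
  it leaves one (#U-1)-sphere for each of the \<Prod>(d(v)-1) such simplices.  Concretely, we map
  the l1-sphere onto the round sphere, sending everything outside a small neighbourhood of the
  centre of the positive facet to a pole, build a homotopy inverse, and lift both maps and both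
  homotopies to the join and to the wedge.\<close>

definition coordwise_continuous :: "'a topology \<Rightarrow> ('a \<Rightarrow> 'v \<Rightarrow> real) \<Rightarrow> bool" where
  "coordwise_continuous T g \<longleftrightarrow> (\<forall>v. continuous_map T euclideanreal (\<lambda>x. g x v))"

lemma coordwise_continuousD:
  "coordwise_continuous T g \<Longrightarrow> continuous_map T euclideanreal (\<lambda>x. g x v)"
  unfolding coordwise_continuous_def by blast

lemma coordwise_continuous_restrict:
  assumes "\<And>v. v \<in> A \<Longrightarrow> continuous_map T euclideanreal (\<lambda>x. h x v)"
  shows "coordwise_continuous T (\<lambda>x. restrict (h x) A)"
  unfolding coordwise_continuous_def
proof
  fix v show "continuous_map T euclideanreal (\<lambda>x. restrict (h x) A v)"
    using assms by (cases "v \<in> A") simp_all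
qed

lemma continuous_map_Min:
  assumes "finite A" "A \<noteq> {}" "\<And>a. a \<in> A \<Longrightarrow> continuous_map T euclideanreal (h a)"
  shows "continuous_map T euclideanreal (\<lambda>x. Min ((\<lambda>a. h a x) ` A))"
  using assms
proof (induction A rule: finite_ne_induct)
  case (singleton a)
  then show ?case by simp
next
  case (insert a F)
  have "(\<lambda>x. Min ((\<lambda>a. h a x) ` insert a F)) = (\<lambda>x. min (h a x) (Min ((\<lambda>a. h a x) ` F)))"
    using insert by (auto simp: Min_insert)
  then show ?case using insert by (auto intro!: continuous_intros)
qed

lemma sum_if_eq_index:
  assumes "i < N"
  shows "(\<Sum>j<N. if j = i then x else y) = x + (real N - 1) * (y::real)"
proof -
  have "(\<Sum>j<N. if j = i then x else y) = x + (\<Sum>j\<in>{..<N}-{i}. y)"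
    using assms by (simp add: sum.remove[of "{..<N}" i] sum.cong[of "{..<N}-{i}" _ _ "\<lambda>_. y"])
  also have "\<dots> = x + (real N - 1) * y" using assms by (simp add: of_nat_diff)
  finally show ?thesis .
qed

lemma prod_indicator:
  assumes "finite A"
  shows "(\<Prod>v\<in>A. if P v then (1::real) else 0) = (if \<forall>v\<in>A. P v then 1 else 0)"
  using assms by (auto simp: prod_zero_iff)

lemma continuous_map_coordinate:
  assumes "continuous_map T (subtopology (powertop_real UNIV) S) g"
  shows "continuous_map T euclideanreal (\<lambda>x. g x i)"
proof -
  have "continuous_map (subtopology (powertop_real UNIV) S) euclideanreal (\<lambda>f. f i)"
    by (intro continuous_map_from_subtopology continuous_map_product_projection) simp
  then show ?thesis using continuous_map_compose[OF assms] by (simp add: o_def)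
qed

lemma continuous_map_into_coordinatewise:
  assumes "\<And>i. continuous_map T euclideanreal (\<lambda>x. g x i)" "\<And>x. x \<in> topspace T \<Longrightarrow> g x \<in> S"
  shows "continuous_map T (subtopology (powertop_real UNIV) S) g"
  using assms by (auto simp: continuous_map_in_subtopology continuous_map_componentwise_UNIV)

lemma homotopic_withI:
  assumes h: "continuous_map (prod_topology (top_of_set {0..1::real}) X) Y h"
    and h0: "\<And>x. x \<in> topspace X \<Longrightarrow> h (0, x) = f x"
    and h1: "\<And>x. x \<in> topspace X \<Longrightarrow> h (1, x) = g x"
  shows "homotopic_with (\<lambda>_. True) X Y f g"
proof -
  define h' where
    "h' = (\<lambda>p. if snd p \<in> topspace X then h p else if fst p = (0::real) then f (snd p) else g (snd p))"
  have "continuous_map (prod_topology (top_of_set {0..1}) X) Y h'"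
    by (rule continuous_map_eq[OF h]) (auto simp: topspace_prod_topology h'_def)
  moreover have "\<forall>x. h' (0, x) = f x" using h0 by (simp add: h'_def)
  moreover have "\<forall>x. h' (1, x) = g x" using h1 by (simp add: h'_def)
  ultimately show ?thesis unfolding homotopic_with_def by blast
qed

section \<open>Collapsing the cross-polytope onto the round sphere\<close>

locale sphere_collapse =
  fixes U :: "'v set" and v0 :: 'v
  assumes finU: "finite U" and v0U: "v0 \<in> U"
begin

definition kU :: real where "kU = real (card U)"

lemma U_nonempty: "U \<noteq> {}" using v0U by auto

lemma kU_pos: "kU > 0" unfolding kU_def using finU U_nonempty by (simp add: card_gt_0_iff)

lemma kU_nonzero: "kU \<noteq> 0" using kU_pos by simp

definition norm1 :: "('v \<Rightarrow> real) \<Rightarrow> real" where "norm1 y = (\<Sum>v\<in>U. \<bar>y v\<bar>)"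
definition sqnorm :: "('v \<Rightarrow> real) \<Rightarrow> real" where "sqnorm y = (\<Sum>v\<in>U. (y v)^2)"
definition coord_sum :: "('v \<Rightarrow> real) \<Rightarrow> real" where "coord_sum y = (\<Sum>v\<in>U. y v)"
definition vmin :: "('v \<Rightarrow> real) \<Rightarrow> real" where "vmin y = Min (y ` U)"
definition excess :: "('v \<Rightarrow> real) \<Rightarrow> real" where "excess y = coord_sum y / kU - vmin y"

definition normalize1 :: "('v \<Rightarrow> real) \<Rightarrow> 'v \<Rightarrow> real" where
  "normalize1 y = restrict (\<lambda>v. y v / norm1 y) U"
definition normalize2 :: "('v \<Rightarrow> real) \<Rightarrow> 'v \<Rightarrow> real" where
  "normalize2 y = restrict (\<lambda>v. y v / sqrt (sqnorm y)) U"

definition sphere1 where "sphere1 = {s \<in> extensional U. norm1 s = 1}"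
definition sphere2 where "sphere2 = {z \<in> extensional U. sqnorm z = 1}"

text \<open>The centre of the negative facet of sphere1, and the point of sphere2 that
  will be the wedge point.\<close>
definition pole1 :: "'v \<Rightarrow> real" where "pole1 = restrict (\<lambda>v. -1/kU) U"
definition pole2 :: "'v \<Rightarrow> real" where "pole2 = restrict (\<lambda>v. if v = v0 then -1 else 0) U"

text \<open>A linear automorphism of R^U taking the diagonal to the v0-axis; untilt is its
  inverse.\<close>
definition tilt :: "('v \<Rightarrow> real) \<Rightarrow> 'v \<Rightarrow> real" where
  "tilt y = restrict (\<lambda>v. if v = v0 then coord_sum y else y v - y v0) U"
definition untilt :: "('v \<Rightarrow> real) \<Rightarrow> 'v \<Rightarrow> real" where
  "untilt y = restrict (\<lambda>v. (y v0 - (\<Sum>u\<in>U-{v0}. y u)) / kU + (if v = v0 then 0 else y v)) U"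

text \<open>facet_weight is positive on a neighbourhood of the centre of the positive facet of
  sphere1.  collapse sends everything outside it to pole2; expand is a homotopy inverse,
  sending pole2 to pole1.\<close>
definition facet_weight :: "('v \<Rightarrow> real) \<Rightarrow> real" where
  "facet_weight s = max 0 (min 1 (2 * kU * vmin s - 1))"

definition collapse_raw :: "('v \<Rightarrow> real) \<Rightarrow> 'v \<Rightarrow> real" where
  "collapse_raw s = restrict (\<lambda>v. facet_weight s * s v - (1 - facet_weight s)) U"
definition collapse :: "('v \<Rightarrow> real) \<Rightarrow> 'v \<Rightarrow> real" where
  "collapse s = normalize2 (tilt (collapse_raw s))"

definition expand_raw :: "('v \<Rightarrow> real) \<Rightarrow> 'v \<Rightarrow> real" where
  "expand_raw z = restrict (\<lambda>v. untilt z v + excess (untilt z)) U"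
definition expand :: "('v \<Rightarrow> real) \<Rightarrow> 'v \<Rightarrow> real" where
  "expand z = normalize1 (expand_raw z)"

text \<open>In untilted coordinates both homotopies have the form y \<mapsto> A y + B (1,...,1) with
  A \<ge> 0, followed by normalization; they run from the identity to expand \<circ> collapse
  and to collapse \<circ> expand respectively.\<close>
definition hom1_scale where "hom1_scale t s = 1 - t + t * facet_weight s"
definition hom1_shift where "hom1_shift t s = t * (facet_weight s * excess s - (1 - facet_weight s))"
definition hom1_raw :: "real \<Rightarrow> ('v \<Rightarrow> real) \<Rightarrow> 'v \<Rightarrow> real" where
  "hom1_raw t s = restrict (\<lambda>v. hom1_scale t s * s v + hom1_shift t s) U"
definition hom1 :: "real \<Rightarrow> ('v \<Rightarrow> real) \<Rightarrow> 'v \<Rightarrow> real" where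
  "hom1 t s = normalize1 (hom1_raw t s)"

definition hom2_scale where
  "hom2_scale t z = 1 - t + t * (facet_weight (expand z) / norm1 (expand_raw z))"
definition hom2_shift where
  "hom2_shift t z = t * (facet_weight (expand z) * excess (untilt z) / norm1 (expand_raw z)
     - (1 - facet_weight (expand z)))"
definition hom2_raw :: "real \<Rightarrow> ('v \<Rightarrow> real) \<Rightarrow> 'v \<Rightarrow> real" where
  "hom2_raw t z = restrict (\<lambda>v. hom2_scale t z * untilt z v + hom2_shift t z) U"
definition hom2 :: "real \<Rightarrow> ('v \<Rightarrow> real) \<Rightarrow> 'v \<Rightarrow> real" where
  "hom2 t z = normalize2 (tilt (hom2_raw t z))"

lemma vmin_le: "v \<in> U \<Longrightarrow> vmin y \<le> y v"
  unfolding vmin_def using finU by auto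

lemma vmin_attained: "\<exists>v\<in>U. vmin y = y v"
proof -
  have "Min (y ` U) \<in> y ` U" using finU U_nonempty by (intro Min_in) auto
  then show ?thesis unfolding vmin_def by auto
qed

lemma vmin_cong: "(\<And>v. v \<in> U \<Longrightarrow> y v = y' v) \<Longrightarrow> vmin y = vmin y'"
proof -
  assume a: "\<And>v. v \<in> U \<Longrightarrow> y v = y' v"
  have "y ` U = y' ` U" using a by (auto simp: image_def)
  then show ?thesis unfolding vmin_def by simp
qed

lemma coord_sum_cong: "(\<And>v. v \<in> U \<Longrightarrow> y v = y' v) \<Longrightarrow> coord_sum y = coord_sum y'"
  unfolding coord_sum_def by simp

lemma excess_cong: "(\<And>v. v \<in> U \<Longrightarrow> y v = y' v) \<Longrightarrow> excess y = excess y'"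
  unfolding excess_def using vmin_cong[of y y'] coord_sum_cong[of y y'] by simp

lemma vmin_affine:
  assumes "a \<ge> 0" shows "vmin (\<lambda>v. a * y v + b) = a * vmin y + b"
proof -
  have m: "mono (\<lambda>x. a * x + b)" using assms by (auto simp: mono_def mult_left_mono)
  have "(\<lambda>v. a * y v + b) ` U = (\<lambda>x. a * x + b) ` (y ` U)" by auto
  then show ?thesis unfolding vmin_def
    using mono_Min_commute[OF m, of "y ` U"] finU U_nonempty by simp
qed

lemma coord_sum_affine: "coord_sum (\<lambda>v. a * y v + b) = a * coord_sum y + kU * b"
  unfolding coord_sum_def kU_def by (simp add: sum.distrib sum_distrib_left)

lemma excess_affine:
  assumes "a \<ge> 0" shows "excess (\<lambda>v. a * y v + b) = a * excess y"
  unfolding excess_def using vmin_affine[OF assms] coord_sum_affine kU_pos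
  by (simp add: field_simps)

lemma vmin_const: "(\<And>v. v \<in> U \<Longrightarrow> y v = c) \<Longrightarrow> vmin y = c"
proof -
  assume a: "\<And>v. v \<in> U \<Longrightarrow> y v = c"
  obtain v where "v \<in> U" "vmin y = y v" using vmin_attained by blast
  then show ?thesis using a by simp
qed

lemma excess_const: "(\<And>v. v \<in> U \<Longrightarrow> y v = c) \<Longrightarrow> excess y = 0"
  using vmin_const[of y c] kU_pos unfolding excess_def coord_sum_def kU_def by simp

lemma norm1_const: "(\<And>v. v \<in> U \<Longrightarrow> y v = c) \<Longrightarrow> norm1 y = kU * \<bar>c\<bar>"
  unfolding norm1_def kU_def by simp

lemma facet_weight_bounds: "0 \<le> facet_weight s" "facet_weight s \<le> 1"
  unfolding facet_weight_def by auto

lemma facet_weight_posD: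
  assumes "facet_weight s > 0" "v \<in> U" shows "s v > 1 / (2 * kU)"
proof -
  have "2 * kU * vmin s - 1 > 0" using assms(1) unfolding facet_weight_def by linarith
  then have "vmin s > 1 / (2 * kU)" using kU_pos by (simp add: field_simps)
  then show ?thesis using vmin_le[OF assms(2), of s] by linarith
qed

lemma norm1_nonneg: "norm1 y \<ge> 0" unfolding norm1_def by (simp add: sum_nonneg)
lemma sqnorm_nonneg: "sqnorm y \<ge> 0" unfolding sqnorm_def by (simp add: sum_nonneg)

lemma norm1_eq_0D:
  assumes "norm1 y = 0" "v \<in> U" shows "y v = 0"
proof -
  have "\<forall>u\<in>U. \<bar>y u\<bar> = 0"
    using sum_nonneg_eq_0_iff[OF finU, of "\<lambda>u. \<bar>y u\<bar>"] assms(1) unfolding norm1_def by simp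
  then show ?thesis using assms(2) by simp
qed

lemma sqnorm_eq_0D:
  assumes "sqnorm y = 0" "v \<in> U" shows "y v = 0"
proof -
  have "\<forall>u\<in>U. (y u)^2 = 0"
    using sum_nonneg_eq_0_iff[OF finU, of "\<lambda>u. (y u)^2"] assms(1) unfolding sqnorm_def by simp
  then show ?thesis using assms(2) by simp
qed

lemma norm1_pos:
  assumes "v \<in> U" "y v \<noteq> 0" shows "norm1 y > 0"
proof -
  have "norm1 y \<noteq> 0" using norm1_eq_0D assms by blast
  then show ?thesis using norm1_nonneg[of y] by linarith
qed

lemma normalize1_in_sphere1:
  assumes "norm1 y > 0" shows "normalize1 y \<in> sphere1"
proof -
  have "norm1 (normalize1 y) = (\<Sum>v\<in>U. \<bar>normalize1 y v\<bar>)" by (simp add: norm1_def)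
  also have "\<dots> = (\<Sum>v\<in>U. \<bar>y v\<bar> / norm1 y)"
    using assms by (intro sum.cong) (simp_all add: abs_div normalize1_def)
  also have "\<dots> = norm1 y / norm1 y" by (simp add: sum_divide_distrib[symmetric] norm1_def)
  finally show ?thesis using assms unfolding sphere1_def normalize1_def by simp
qed

lemma normalize2_in_sphere2:
  assumes "sqnorm y > 0" shows "normalize2 y \<in> sphere2"
proof -
  have "sqnorm (normalize2 y) = (\<Sum>v\<in>U. (normalize2 y v)^2)" by (simp add: sqnorm_def)
  also have "\<dots> = (\<Sum>v\<in>U. (y v)^2 / sqnorm y)"
    using assms by (intro sum.cong) (simp_all add: power_divide normalize2_def)
  also have "\<dots> = sqnorm y / sqnorm y" by (simp add: sum_divide_distrib[symmetric] sqnorm_def)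
  finally show ?thesis using assms unfolding sphere2_def normalize2_def by simp
qed

lemma normalize1_sphere1:
  assumes "s \<in> sphere1" shows "normalize1 s = s"
proof -
  have "normalize1 s = restrict s U" unfolding normalize1_def using assms unfolding sphere1_def by simp
  then show ?thesis using assms unfolding sphere1_def by (simp add: extensional_restrict)
qed

lemma normalize2_sphere2:
  assumes "z \<in> sphere2" shows "normalize2 z = z"
proof -
  have "normalize2 z = restrict z U" unfolding normalize2_def using assms unfolding sphere2_def by simp
  then show ?thesis using assms unfolding sphere2_def by (simp add: extensional_restrict)
qed

lemma normalize1_divide:
  assumes c: "c > 0"
  shows "normalize1 (restrict (\<lambda>v. y v / c) U) = normalize1 y"
proof -
  have "norm1 (restrict (\<lambda>v. y v / c) U) = (\<Sum>v\<in>U. \<bar>restrict (\<lambda>v. y v / c) U v\<bar>)"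
    by (simp add: norm1_def)
  also have "\<dots> = (\<Sum>v\<in>U. \<bar>y v\<bar> / c)"
    using c by (intro sum.cong) (simp_all add: abs_div)
  also have "\<dots> = norm1 y / c" by (simp add: sum_divide_distrib[symmetric] norm1_def)
  finally have l: "norm1 (restrict (\<lambda>v. y v / c) U) = norm1 y / c" .
  show ?thesis
  proof
    fix v show "normalize1 (restrict (\<lambda>v. y v / c) U) v = normalize1 y v"
      unfolding normalize1_def l using c by (cases "v \<in> U") simp_all
  qed
qed

lemma untilt_cong:
  assumes "\<And>v. v \<in> U \<Longrightarrow> y v = y' v" shows "untilt y = untilt y'"
proof
  have s: "(\<Sum>u\<in>U-{v0}. y u) = (\<Sum>u\<in>U-{v0}. y' u)" using assms by (intro sum.cong) auto
  fix v show "untilt y v = untilt y' v"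
    unfolding untilt_def using assms v0U s by (cases "v \<in> U") simp_all
qed

lemma tilt_cong:
  assumes "\<And>v. v \<in> U \<Longrightarrow> y v = y' v" shows "tilt y = tilt y'"
proof
  fix v show "tilt y v = tilt y' v"
    unfolding tilt_def using assms v0U coord_sum_cong[of y y', OF assms] by (cases "v \<in> U") simp_all
qed

lemma sum_U_split_v0: "(\<Sum>u\<in>U. y u) = y v0 + (\<Sum>u\<in>U-{v0}. y u)"
  using finU v0U by (simp add: sum.remove)

lemma card_U_minus_v0: "real (card (U - {v0})) = kU - 1"
proof -
  have "card U \<ge> 1" using finU U_nonempty by (simp add: Suc_le_eq card_gt_0_iff)
  then show ?thesis unfolding kU_def using finU v0U by (simp add: of_nat_diff)
qed

lemma untilt_tilt: "v \<in> U \<Longrightarrow> untilt (tilt y) v = y v"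
proof -
  assume v: "v \<in> U"
  have s: "(\<Sum>u\<in>U-{v0}. tilt y u) = (\<Sum>u\<in>U-{v0}. y u - y v0)"
    unfolding tilt_def by (rule sum.cong) auto
  have s2: "(\<Sum>u\<in>U-{v0}. y u - y v0) = (\<Sum>u\<in>U-{v0}. y u) - (kU - 1) * y v0"
    by (simp add: sum_subtractf card_U_minus_v0)
  have "tilt y v0 = coord_sum y" unfolding tilt_def using v0U by simp
  then have "(tilt y v0 - (\<Sum>u\<in>U-{v0}. tilt y u)) / kU = y v0"
    using s s2 kU_pos sum_U_split_v0[of y] unfolding coord_sum_def by (simp add: field_simps)
  then show ?thesis using v unfolding untilt_def[of "tilt y"] by (simp add: tilt_def)
qed

lemma tilt_untilt: "v \<in> U \<Longrightarrow> tilt (untilt y) v = y v"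
proof -
  assume v: "v \<in> U"
  define c where "c = (y v0 - (\<Sum>u\<in>U-{v0}. y u)) / kU"
  have untilt_at: "\<And>u. u \<in> U \<Longrightarrow> untilt y u = c + (if u = v0 then 0 else y u)"
    unfolding untilt_def c_def by simp
  have "coord_sum (untilt y) = (\<Sum>u\<in>U. c + (if u = v0 then 0 else y u))"
    unfolding coord_sum_def by (rule sum.cong) (auto simp: untilt_at)
  also have "\<dots> = kU * c + (\<Sum>u\<in>U. if u = v0 then 0 else y u)"
    by (simp add: sum.distrib kU_def)
  also have "(\<Sum>u\<in>U. if u = v0 then 0 else y u) = (\<Sum>u\<in>U-{v0}. y u)"
  proof -
    have "(\<Sum>u\<in>U-{v0}. if u = v0 then 0 else y u) = (\<Sum>u\<in>U-{v0}. y u)"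
      by (intro sum.cong) auto
    then show ?thesis using sum_U_split_v0[of "\<lambda>u. if u = v0 then 0 else y u"] by simp
  qed
  finally have "coord_sum (untilt y) = y v0" unfolding c_def using kU_pos by simp
  then show ?thesis using v untilt_at v0U unfolding tilt_def by auto
qed

lemma tilt_extensional: "tilt y \<in> extensional U" unfolding tilt_def by simp

lemma untilt_extensional: "untilt y \<in> extensional U" unfolding untilt_def by simp

lemma untilt_divide:
  assumes "c \<noteq> 0" "v \<in> U"
  shows "untilt (restrict (\<lambda>v. y v / c) U) v = untilt y v / c"
proof -
  have s: "(\<Sum>u\<in>U-{v0}. restrict (\<lambda>v. y v / c) U u) = (\<Sum>u\<in>U-{v0}. y u) / c"
    by (simp add: sum_divide_distrib)
  show ?thesis unfolding untilt_def using assms v0U s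
    by (simp add: diff_divide_distrib add_divide_distrib mult.commute)
qed

lemma sqnorm_tilt_pos:
  assumes "v \<in> U" "y v \<noteq> 0" shows "sqnorm (tilt y) > 0"
proof (rule ccontr)
  assume "\<not> sqnorm (tilt y) > 0"
  then have "sqnorm (tilt y) = 0" using sqnorm_nonneg[of "tilt y"] by linarith
  then have "\<And>u. u \<in> U \<Longrightarrow> tilt y u = 0" using sqnorm_eq_0D by blast
  then have "untilt (tilt y) = untilt (\<lambda>_. 0)" by (rule untilt_cong)
  then have "y v = untilt (\<lambda>_. 0) v" using untilt_tilt assms(1) by metis
  also have "\<dots> = 0" unfolding untilt_def using assms by simp
  finally show False using assms by simp
qed

lemma untilt_sphere2_nonzero:
  assumes "z \<in> sphere2" shows "\<exists>v\<in>U. untilt z v \<noteq> 0"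
proof (rule ccontr)
  assume "\<not> ?thesis"
  then have "\<And>v. v \<in> U \<Longrightarrow> untilt z v = (\<lambda>_. 0) v" by simp
  then have "tilt (untilt z) = tilt (\<lambda>_. 0)" by (rule tilt_cong)
  then have "\<And>v. v \<in> U \<Longrightarrow> z v = tilt (\<lambda>_. 0) v" using tilt_untilt by metis
  then have "\<And>v. v \<in> U \<Longrightarrow> z v = 0" unfolding tilt_def coord_sum_def by simp
  then have "sqnorm z = 0" unfolding sqnorm_def by simp
  then show False using assms unfolding sphere2_def by simp
qed


lemma sphere1_const:
  assumes "s \<in> sphere1" "\<And>v. v \<in> U \<Longrightarrow> s v = c"
  shows "c = 1/kU \<or> c = -1/kU"
proof -
  have "kU * \<bar>c\<bar> = 1" using norm1_const[of s c] assms unfolding sphere1_def by simp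
  then have "\<bar>c\<bar> = 1/kU" using kU_pos by (simp add: field_simps)
  then show ?thesis by (cases "c \<ge> 0") simp_all
qed

lemma facet_weight_const_pos:
  assumes "\<And>v. v \<in> U \<Longrightarrow> s v = 1/kU"
  shows "facet_weight s = 1"
proof -
  have "vmin s = 1/kU" using vmin_const assms by blast
  then show ?thesis unfolding facet_weight_def using kU_pos by simp
qed

lemma facet_weight_const_neg:
  assumes "\<And>v. v \<in> U \<Longrightarrow> s v = -1/kU"
  shows "facet_weight s = 0"
proof -
  have "vmin s = -1/kU" using vmin_const assms by blast
  then show ?thesis unfolding facet_weight_def using kU_pos by simp
qed

lemma hom1_scale_nonneg:
  assumes "0 \<le> t" "t \<le> 1" shows "hom1_scale t s \<ge> 0"
  unfolding hom1_scale_def using assms facet_weight_bounds[of s] by simp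

lemma hom1_scale_eq_0D:
  assumes "0 \<le> t" "t \<le> 1" "hom1_scale t s = 0"
  shows "t = 1" "facet_weight s = 0"
proof -
  have "t * facet_weight s \<ge> 0" using assms facet_weight_bounds[of s] by simp
  then show "t = 1" using assms unfolding hom1_scale_def by linarith
  then show "facet_weight s = 0" using assms unfolding hom1_scale_def by simp
qed

lemma norm1_hom1_raw_pos:
  assumes s: "s \<in> sphere1" and t: "0 \<le> t" "t \<le> 1"
  shows "norm1 (hom1_raw t s) > 0"
proof (rule ccontr)
  assume "\<not> ?thesis"
  then have zero: "\<And>v. v \<in> U \<Longrightarrow> hom1_scale t s * s v + hom1_shift t s = 0"
    using norm1_pos[of _ "hom1_raw t s"] by (fastforce simp: hom1_raw_def)
  show False
  proof (cases "hom1_scale t s = 0")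
    case True
    then have "t = 1" "facet_weight s = 0" using hom1_scale_eq_0D t by auto
    then have "hom1_shift t s = -1" unfolding hom1_shift_def by simp
    then show False using zero[OF v0U] True by simp
  next
    case False
    define c where "c = - hom1_shift t s / hom1_scale t s"
    have const: "\<And>v. v \<in> U \<Longrightarrow> s v = c"
      using zero False unfolding c_def by (simp add: field_simps eq_neg_iff_add_eq_0)
    have excess0: "excess s = 0" using excess_const const by blast
    consider "c = 1/kU" | "c = -1/kU" using sphere1_const[OF s const] by blast
    then show False
    proof cases
      case 1
      then have "facet_weight s = 1" using facet_weight_const_pos const by simp
      then have "hom1_scale t s = 1" "hom1_shift t s = 0" unfolding hom1_scale_def hom1_shift_def
        using excess0 by simp_all
      then show False using zero[OF v0U] const[OF v0U] 1 kU_pos by simp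
    next
      case 2
      then have "facet_weight s = 0" using facet_weight_const_neg const by simp
      then have "hom1_scale t s = 1 - t" "hom1_shift t s = - t" unfolding hom1_scale_def hom1_shift_def
        by simp_all
      then have "(1 - t) * (1/kU) + t = 0" using zero[OF v0U] const[OF v0U] 2 by simp
      moreover have "(1 - t) * (1/kU) \<ge> 0" using t kU_pos by simp
      ultimately have "t = 0" "(1 - t) * (1/kU) = 0" using t by linarith+
      then show False using kU_pos by simp
    qed
  qed
qed

lemma hom1_in_sphere1: "s \<in> sphere1 \<Longrightarrow> 0 \<le> t \<Longrightarrow> t \<le> 1 \<Longrightarrow> hom1 t s \<in> sphere1"
  unfolding hom1_def using norm1_hom1_raw_pos normalize1_in_sphere1 by blast

lemma hom1_0:
  assumes "s \<in> sphere1" shows "hom1 0 s = s"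
proof -
  have "hom1_raw 0 s = restrict s U" unfolding hom1_raw_def hom1_scale_def hom1_shift_def by simp
  also have "\<dots> = s" using assms unfolding sphere1_def by (simp add: extensional_restrict)
  finally show ?thesis unfolding hom1_def using normalize1_sphere1 assms by simp
qed

lemma collapse_raw_nonzero:
  assumes s: "s \<in> sphere1" shows "\<exists>v\<in>U. collapse_raw s v \<noteq> 0"
proof (rule ccontr)
  assume "\<not> ?thesis"
  then have zero: "\<And>v. v \<in> U \<Longrightarrow> facet_weight s * s v - (1 - facet_weight s) = 0"
    by (simp add: collapse_raw_def)
  show False
  proof (cases "facet_weight s = 0")
    case True
    then show False using zero[OF v0U] by simp
  next
    case False
    then have ep: "facet_weight s > 0" using facet_weight_bounds[of s] by linarith
    define c where "c = (1 - facet_weight s) / facet_weight s"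
    have const: "\<And>v. v \<in> U \<Longrightarrow> s v = c" using zero False unfolding c_def
      by (simp add: field_simps)
    have c0: "c \<ge> 0" unfolding c_def using ep facet_weight_bounds[of s] by simp
    have "c = 1/kU" using sphere1_const[OF s const] c0 kU_pos
      by (metis divide_minus_left neg_0_le_iff_le not_less zero_less_divide_1_iff)
    then have "facet_weight s = 1" using facet_weight_const_pos const by simp
    then have "c = 0" unfolding c_def by simp
    then show False using \<open>c = 1/kU\<close> kU_pos by simp
  qed
qed

lemma collapse_in_sphere2:
  assumes "s \<in> sphere1" shows "collapse s \<in> sphere2"
proof -
  obtain v where "v \<in> U" "collapse_raw s v \<noteq> 0" using collapse_raw_nonzero[OF assms] by blast
  then have "sqnorm (tilt (collapse_raw s)) > 0" by (rule sqnorm_tilt_pos)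
  then show ?thesis unfolding collapse_def by (rule normalize2_in_sphere2)
qed

lemma normalize2_tilt_neg_const:
  assumes "d < 0"
  shows "normalize2 (tilt (restrict (\<lambda>v. d) U)) = pole2"
proof -
  define y where "y = restrict (\<lambda>v. d) U"
  have yv: "\<And>v. v \<in> U \<Longrightarrow> y v = d" unfolding y_def by simp
  have vs: "coord_sum y = kU * d" unfolding coord_sum_def kU_def using yv by simp
  have L: "\<And>v. v \<in> U \<Longrightarrow> tilt y v = (if v = v0 then kU * d else 0)"
    unfolding tilt_def using vs v0U yv by simp
  have "sqnorm (tilt y) = (tilt y v0)^2 + (\<Sum>u\<in>U-{v0}. (tilt y u)^2)"
    unfolding sqnorm_def by (rule sum_U_split_v0)
  also have "(\<Sum>u\<in>U-{v0}. (tilt y u)^2) = 0" by (intro sum.neutral) (simp add: L)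
  also have "tilt y v0 = kU * d" using L[OF v0U] by simp
  finally have "sqnorm (tilt y) = (kU * d)^2" by simp
  moreover have "kU * d < 0" using assms kU_pos by (simp add: mult_pos_neg)
  ultimately have sqnorm: "sqrt (sqnorm (tilt y)) = - (kU * d)" by simp
  have "normalize2 (tilt y) = pole2"
  proof
    fix v show "normalize2 (tilt y) v = pole2 v"
      unfolding normalize2_def pole2_def sqnorm using L assms kU_pos by (cases "v \<in> U") simp_all
  qed
  then show ?thesis unfolding y_def .
qed

lemma collapse_facet_weight_0: "facet_weight s = 0 \<Longrightarrow> collapse s = pole2"
  unfolding collapse_def collapse_raw_def using normalize2_tilt_neg_const[of "-1"] by simp

lemma norm1_expand_raw_pos:
  assumes z: "z \<in> sphere2" shows "norm1 (expand_raw z) > 0"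
proof (rule ccontr)
  assume "\<not> ?thesis"
  then have "\<And>v. v \<in> U \<Longrightarrow> expand_raw z v = 0" using norm1_pos by fastforce
  then have c: "\<And>v. v \<in> U \<Longrightarrow> untilt z v = - excess (untilt z)"
    unfolding expand_raw_def by (simp add: eq_neg_iff_add_eq_0)
  then have "excess (untilt z) = 0" using excess_const by blast
  then have "\<And>v. v \<in> U \<Longrightarrow> untilt z v = 0" using c by simp
  then show False using untilt_sphere2_nonzero[OF z] by blast
qed

lemma expand_in_sphere1: "z \<in> sphere2 \<Longrightarrow> expand z \<in> sphere1"
  unfolding expand_def using norm1_expand_raw_pos normalize1_in_sphere1 by blast

lemma untilt_pole2: "untilt pole2 = pole1"
proof
  have s: "(\<Sum>u\<in>U-{v0}. pole2 u) = 0" by (intro sum.neutral) (simp add: pole2_def)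
  fix v show "untilt pole2 v = pole1 v"
    unfolding untilt_def pole1_def using s v0U by (cases "v \<in> U") (simp_all add: pole2_def)
qed

lemma pole1_in_sphere1: "pole1 \<in> sphere1"
proof -
  have "norm1 pole1 = kU * \<bar>-1/kU\<bar>" by (rule norm1_const) (simp add: pole1_def)
  then show ?thesis unfolding sphere1_def pole1_def using kU_pos by simp
qed

lemma expand_pole2: "expand pole2 = pole1"
proof -
  have excess0: "excess pole1 = 0" by (rule excess_const[of _ "-1/kU"]) (simp add: pole1_def)
  have "expand_raw pole2 = pole1" unfolding expand_raw_def untilt_pole2 excess0 unfolding pole1_def
    by (intro restrict_ext) simp
  then show ?thesis unfolding expand_def using normalize1_sphere1 pole1_in_sphere1 by simp
qed

lemma facet_weight_pole1: "facet_weight pole1 = 0"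
  by (rule facet_weight_const_neg) (simp add: pole1_def)

lemma hom1_1:
  assumes s: "s \<in> sphere1"
  shows "hom1 1 s = expand (collapse s)"
proof -
  define l where "l = facet_weight s"
  define c where "c = sqrt (sqnorm (tilt (collapse_raw s)))"
  obtain v1 where "v1 \<in> U" "collapse_raw s v1 \<noteq> 0" using collapse_raw_nonzero[OF s] by blast
  then have "sqnorm (tilt (collapse_raw s)) > 0" by (rule sqnorm_tilt_pos)
  then have c: "c > 0" unfolding c_def by simp
  have untilt_collapse: "untilt (collapse s) v = (l / c) * s v + (- (1 - l) / c)" if v: "v \<in> U" for v
  proof -
    have "collapse s = restrict (\<lambda>v. tilt (collapse_raw s) v / c) U"
      unfolding collapse_def normalize2_def c_def ..
    then have "untilt (collapse s) v = untilt (tilt (collapse_raw s)) v / c"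
      using c v by (simp add: untilt_divide)
    also have "\<dots> = collapse_raw s v / c" using untilt_tilt v by simp
    also have "\<dots> = (l / c) * s v + (- (1 - l) / c)"
      unfolding collapse_raw_def l_def using v c by (simp add: field_simps)
    finally show ?thesis .
  qed
  have "excess (untilt (collapse s)) = excess (\<lambda>v. (l / c) * s v + (- (1 - l) / c))"
    using untilt_collapse by (rule excess_cong)
  also have "\<dots> = (l / c) * excess s"
    using c facet_weight_bounds[of s] unfolding l_def by (intro excess_affine) simp
  finally have excess: "excess (untilt (collapse s)) = (l / c) * excess s" .
  have "expand_raw (collapse s) v = restrict (\<lambda>v. hom1_raw 1 s v / c) U v" for v
  proof (cases "v \<in> U")
    case True
    then have "expand_raw (collapse s) v = (l / c) * s v + (- (1 - l) / c) + (l / c) * excess s"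
      unfolding expand_raw_def excess using untilt_collapse by simp
    also have "\<dots> = hom1_raw 1 s v / c"
      unfolding hom1_raw_def hom1_scale_def hom1_shift_def l_def using True c by (simp add: field_simps)
    finally show ?thesis using True by simp
  qed (simp add: expand_raw_def)
  then have "expand_raw (collapse s) = restrict (\<lambda>v. hom1_raw 1 s v / c) U" ..
  then have "expand (collapse s) = normalize1 (hom1_raw 1 s)"
    unfolding expand_def using normalize1_divide[OF c] by simp
  then show ?thesis unfolding hom1_def by simp
qed

lemma hom2_scale_eq_0D:
  assumes "z \<in> sphere2" "0 \<le> t" "t \<le> 1" "hom2_scale t z = 0"
  shows "t = 1" "facet_weight (expand z) = 0"
proof -
  have "t * (facet_weight (expand z) / norm1 (expand_raw z)) \<ge> 0"
    using assms facet_weight_bounds norm1_expand_raw_pos[OF assms(1)] by simp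
  then show "t = 1" using assms unfolding hom2_scale_def by linarith
  then show "facet_weight (expand z) = 0"
    using assms norm1_expand_raw_pos[OF assms(1)] unfolding hom2_scale_def by simp
qed

lemma expand_untilt_const:
  assumes "\<And>v. v \<in> U \<Longrightarrow> untilt z v = c"
  shows "excess (untilt z) = 0" "\<And>v. v \<in> U \<Longrightarrow> expand z v = sgn c / kU"
proof -
  show excess: "excess (untilt z) = 0" using excess_const assms by blast
  then have raw: "\<And>v. v \<in> U \<Longrightarrow> expand_raw z v = c" unfolding expand_raw_def
    using assms by simp
  then have "norm1 (expand_raw z) = kU * \<bar>c\<bar>" by (rule norm1_const)
  then show "\<And>v. v \<in> U \<Longrightarrow> expand z v = sgn c / kU"
    unfolding expand_def normalize1_def using raw by (simp add: sgn_if)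
qed

lemma hom2_raw_nonzero:
  assumes z: "z \<in> sphere2" and t: "0 \<le> t" "t \<le> 1"
  shows "\<exists>v\<in>U. hom2_raw t z v \<noteq> 0"
proof (rule ccontr)
  assume "\<not> ?thesis"
  then have zero: "\<And>v. v \<in> U \<Longrightarrow> hom2_scale t z * untilt z v + hom2_shift t z = 0"
    by (simp add: hom2_raw_def)
  show False
  proof (cases "hom2_scale t z = 0")
    case True
    with hom2_scale_eq_0D[OF z t] have "hom2_shift t z = -1" unfolding hom2_shift_def by simp
    then show False using zero[OF v0U] True by simp
  next
    case False
    define c where "c = - hom2_shift t z / hom2_scale t z"
    have const: "\<And>v. v \<in> U \<Longrightarrow> untilt z v = c"
      using zero False unfolding c_def by (simp add: field_simps eq_neg_iff_add_eq_0)
    have "c \<noteq> 0" using untilt_sphere2_nonzero[OF z] const by auto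
    then consider "c > 0" | "c < 0" by linarith
    then show False
    proof cases
      case 1
      then have "facet_weight (expand z) = 1"
        using expand_untilt_const(2)[OF const] by (intro facet_weight_const_pos) simp
      then have "hom2_shift t z = 0"
        unfolding hom2_shift_def using expand_untilt_const(1)[OF const] by simp
      then show False using zero[OF v0U] const[OF v0U] False 1 by simp
    next
      case 2
      then have "facet_weight (expand z) = 0"
        using expand_untilt_const(2)[OF const] by (intro facet_weight_const_neg) simp
      then have "(1 - t) * c - t = 0"
        using zero[OF v0U] const[OF v0U] unfolding hom2_scale_def hom2_shift_def by simp
      moreover have "(1 - t) * c \<le> 0" using t 2 by (simp add: mult_nonneg_nonpos)
      ultimately show False using t 2 by (smt (verit) mult_eq_0_iff)
    qed
  qed
qed

lemma hom2_in_sphere2: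
  assumes "z \<in> sphere2" "0 \<le> t" "t \<le> 1" shows "hom2 t z \<in> sphere2"
proof -
  obtain v where "v \<in> U" "hom2_raw t z v \<noteq> 0" using hom2_raw_nonzero[OF assms] by blast
  then have "sqnorm (tilt (hom2_raw t z)) > 0" by (rule sqnorm_tilt_pos)
  then show ?thesis unfolding hom2_def by (rule normalize2_in_sphere2)
qed

lemma tilt_untilt_extensional:
  assumes "z \<in> extensional U" shows "tilt (untilt z) = z"
proof
  fix v show "tilt (untilt z) v = z v"
    using tilt_untilt[of v z] tilt_extensional[of "untilt z"] assms
      by (cases "v \<in> U") (simp_all add: extensional_def)
qed

lemma hom2_0:
  assumes "z \<in> sphere2" shows "hom2 0 z = z"
proof -
  have "hom2_raw 0 z = restrict (untilt z) U" unfolding hom2_raw_def hom2_scale_def hom2_shift_def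
    by simp
  also have "\<dots> = untilt z" using untilt_extensional by (simp add: extensional_restrict)
  finally show ?thesis unfolding hom2_def using tilt_untilt_extensional normalize2_sphere2 assms
    unfolding sphere2_def by simp
qed

lemma hom2_1:
  assumes "z \<in> sphere2" shows "hom2 1 z = collapse (expand z)"
proof -
  define n where "n = norm1 (expand_raw z)"
  have n: "n > 0" unfolding n_def using norm1_expand_raw_pos[OF assms] .
  have expand_at: "\<And>v. v \<in> U \<Longrightarrow> expand z v = (untilt z v + excess (untilt z)) / n"
    unfolding expand_def normalize1_def n_def expand_raw_def by simp
  have "hom2_raw 1 z = collapse_raw (expand z)"
  proof
    fix v show "hom2_raw 1 z v = collapse_raw (expand z) v"
      using n unfolding hom2_raw_def collapse_raw_def hom2_scale_def hom2_shift_def n_def[symmetric]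
      by (cases "v \<in> U") (simp_all add: expand_at field_simps)
  qed
  then show ?thesis unfolding hom2_def collapse_def by simp
qed

lemma hom2_pole2:
  assumes "0 \<le> t" "t \<le> 1" shows "hom2 t pole2 = pole2"
proof -
  have e: "facet_weight (expand pole2) = 0" using expand_pole2 facet_weight_pole1 by simp
  have "hom2_raw t pole2 = restrict (\<lambda>v. - ((1 - t) / kU + t)) U"
    unfolding hom2_raw_def hom2_scale_def hom2_shift_def e untilt_pole2
      by (intro restrict_ext) (simp add: pole1_def field_simps)
  moreover have "- ((1 - t) / kU + t) < 0"
  proof (cases "t = 1")
    case False
    then have "(1 - t) / kU > 0" using assms kU_pos by simp
    then show ?thesis using assms by linarith
  qed simp
  ultimately show ?thesis unfolding hom2_def using normalize2_tilt_neg_const by simp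
qed

lemma hom1_shift_posD: "hom1_shift t s > 0 \<Longrightarrow> 0 \<le> t \<Longrightarrow> facet_weight s > 0"
  unfolding hom1_shift_def using facet_weight_bounds[of s] by (cases "facet_weight s = 0") auto

lemma hom1_pos_iff:
  assumes "s \<in> sphere1" "0 \<le> t" "t \<le> 1" "v \<in> U"
  shows "hom1 t s v > 0 \<longleftrightarrow> hom1_scale t s * s v + hom1_shift t s > 0"
  using norm1_hom1_raw_pos[OF assms(1-3)] assms(4) unfolding hom1_def normalize1_def
  by (simp add: hom1_raw_def zero_less_divide_iff)

lemma continuous_map_norm1:
  "coordwise_continuous T g \<Longrightarrow> continuous_map T euclideanreal (\<lambda>x. norm1 (g x))"
  unfolding norm1_def using finU by (intro continuous_intros) (simp_all add: coordwise_continuousD)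

lemma continuous_map_sqnorm:
  "coordwise_continuous T g \<Longrightarrow> continuous_map T euclideanreal (\<lambda>x. sqnorm (g x))"
  unfolding sqnorm_def using finU by (intro continuous_intros) (simp_all add: coordwise_continuousD)

lemma continuous_map_coord_sum:
  "coordwise_continuous T g \<Longrightarrow> continuous_map T euclideanreal (\<lambda>x. coord_sum (g x))"
  unfolding coord_sum_def using finU by (intro continuous_intros) (simp_all add: coordwise_continuousD)

lemma continuous_map_vmin:
  assumes "coordwise_continuous T g"
  shows "continuous_map T euclideanreal (\<lambda>x. vmin (g x))"
proof -
  have "continuous_map T euclideanreal (\<lambda>x. Min ((\<lambda>a. g x a) ` U))"
    by (rule continuous_map_Min[OF finU U_nonempty]) (rule coordwise_continuousD[OF assms])
  then show ?thesis by (simp add: vmin_def)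
qed

lemma continuous_map_excess:
  "coordwise_continuous T g \<Longrightarrow> continuous_map T euclideanreal (\<lambda>x. excess (g x))"
  unfolding excess_def
  by (intro continuous_intros continuous_map_coord_sum continuous_map_vmin) (simp_all add: kU_nonzero)

lemma continuous_map_facet_weight:
  "coordwise_continuous T g \<Longrightarrow> continuous_map T euclideanreal (\<lambda>x. facet_weight (g x))"
  unfolding facet_weight_def by (intro continuous_intros continuous_map_vmin) simp_all

lemma coordwise_continuous_normalize1:
  assumes "coordwise_continuous T g" "\<And>x. x \<in> topspace T \<Longrightarrow> norm1 (g x) \<noteq> 0"
  shows "coordwise_continuous T (\<lambda>x. normalize1 (g x))"
  unfolding normalize1_def
  by (intro coordwise_continuous_restrict continuous_intros continuous_map_norm1 assms
      coordwise_continuousD[OF assms(1)])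

lemma coordwise_continuous_normalize2:
  assumes "coordwise_continuous T g" "\<And>x. x \<in> topspace T \<Longrightarrow> sqnorm (g x) > 0"
  shows "coordwise_continuous T (\<lambda>x. normalize2 (g x))"
  unfolding normalize2_def
proof (intro coordwise_continuous_restrict continuous_intros continuous_map_sqnorm assms
  coordwise_continuousD[OF assms(1)])
  fix x assume "x \<in> topspace T" then have "sqnorm (g x) > 0" using assms(2) by blast
  then show "sqrt (sqnorm (g x)) \<noteq> 0" by simp
qed

lemma coordwise_continuous_tilt: "coordwise_continuous T g \<Longrightarrow> coordwise_continuous T (\<lambda>x. tilt (g x))"
  unfolding tilt_def
proof (intro coordwise_continuous_restrict)
  fix v assume "coordwise_continuous T g" then show "continuous_map T euclideanreal (\<lambda>x. if v = v0
    then coord_sum (g x) else g x v - g x v0)"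
    by (cases "v = v0") (simp_all add: continuous_map_coord_sum coordwise_continuousD
      continuous_map_diff)
qed

lemma coordwise_continuous_untilt:
  "coordwise_continuous T g \<Longrightarrow> coordwise_continuous T (\<lambda>x. untilt (g x))"
  unfolding untilt_def
proof (intro coordwise_continuous_restrict)
  fix v assume g: "coordwise_continuous T g"
  have c1: "continuous_map T euclideanreal (\<lambda>x. (g x v0 - (\<Sum>u\<in>U-{v0}. g x u)) / kU)"
    using finU kU_pos g by (intro continuous_intros) (simp_all add: coordwise_continuousD)
  show "continuous_map T euclideanreal (\<lambda>x. (g x v0 - (\<Sum>u\<in>U-{v0}. g x u)) / kU + (if v = v0 then 0
    else g x v))"
    using c1 g by (cases "v = v0") (simp_all add: coordwise_continuousD continuous_map_add)
qed

lemma coordwise_continuous_collapse: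
  assumes g: "coordwise_continuous T g" and S: "\<And>x. x \<in> topspace T \<Longrightarrow> g x \<in> sphere1"
  shows "coordwise_continuous T (\<lambda>x. collapse (g x))"
  unfolding collapse_def collapse_raw_def
proof (intro coordwise_continuous_normalize2 coordwise_continuous_tilt coordwise_continuous_restrict)
  fix v show "continuous_map T euclideanreal (\<lambda>x. facet_weight (g x) * g x v - (1 - facet_weight
    (g x)))"
    using g by (intro continuous_intros continuous_map_facet_weight coordwise_continuousD) simp_all
next
  fix x assume x: "x \<in> topspace T"
  obtain v where "v \<in> U" "collapse_raw (g x) v \<noteq> 0" using collapse_raw_nonzero[OF S[OF x]] by blast
  then show "sqnorm (tilt (restrict (\<lambda>v. facet_weight (g x) * g x v - (1 - facet_weight (g x))) U)) > 0"
    unfolding collapse_raw_def by (rule sqnorm_tilt_pos)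
qed

lemma coordwise_continuous_expand_raw:
  "coordwise_continuous T g \<Longrightarrow> coordwise_continuous T (\<lambda>x. expand_raw (g x))"
  unfolding expand_raw_def
  by (intro coordwise_continuous_restrict continuous_intros continuous_map_excess
    coordwise_continuous_untilt coordwise_continuousD[OF coordwise_continuous_untilt]) simp_all

lemma coordwise_continuous_expand:
  assumes g: "coordwise_continuous T g" and S: "\<And>x. x \<in> topspace T \<Longrightarrow> g x \<in> sphere2"
  shows "coordwise_continuous T (\<lambda>x. expand (g x))"
  unfolding expand_def
proof (intro coordwise_continuous_normalize1 coordwise_continuous_expand_raw g)
  fix x assume "x \<in> topspace T" then show "norm1 (expand_raw (g x)) \<noteq> 0"
    using norm1_expand_raw_pos[OF S] by fastforce
qed

lemma continuous_map_hom1_scale: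
  assumes "continuous_map T euclideanreal \<tau>" "coordwise_continuous T g"
  shows "continuous_map T euclideanreal (\<lambda>x. hom1_scale (\<tau> x) (g x))"
  unfolding hom1_scale_def by (intro continuous_intros continuous_map_facet_weight assms)

lemma continuous_map_hom1_shift:
  assumes "continuous_map T euclideanreal \<tau>" "coordwise_continuous T g"
  shows "continuous_map T euclideanreal (\<lambda>x. hom1_shift (\<tau> x) (g x))"
  unfolding hom1_shift_def
  by (intro continuous_intros continuous_map_facet_weight continuous_map_excess assms)

lemma continuous_map_hom2_scale:
  assumes t: "continuous_map T euclideanreal \<tau>" and g: "coordwise_continuous T g"
  and S: "\<And>x. x \<in> topspace T \<Longrightarrow> g x \<in> sphere2"
  shows "continuous_map T euclideanreal (\<lambda>x. hom2_scale (\<tau> x) (g x))"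
  unfolding hom2_scale_def
proof (intro continuous_intros continuous_map_facet_weight coordwise_continuous_expand
  continuous_map_norm1 coordwise_continuous_expand_raw t g S)
  fix x assume "x \<in> topspace T" then show "norm1 (expand_raw (g x)) \<noteq> 0"
    using norm1_expand_raw_pos[OF S] by fastforce
qed simp_all

lemma continuous_map_hom2_shift:
  assumes t: "continuous_map T euclideanreal \<tau>" and g: "coordwise_continuous T g"
  and S: "\<And>x. x \<in> topspace T \<Longrightarrow> g x \<in> sphere2"
  shows "continuous_map T euclideanreal (\<lambda>x. hom2_shift (\<tau> x) (g x))"
  unfolding hom2_shift_def
proof (intro continuous_intros continuous_map_facet_weight coordwise_continuous_expand
  continuous_map_norm1 coordwise_continuous_expand_raw continuous_map_excess
  coordwise_continuous_untilt t g S)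
  fix x assume "x \<in> topspace T" then show "norm1 (expand_raw (g x)) \<noteq> 0"
    using norm1_expand_raw_pos[OF S] by fastforce
qed simp_all

lemma coordwise_continuous_hom2:
  assumes t: "continuous_map T euclideanreal \<tau>" and g: "coordwise_continuous T g"
  and S: "\<And>x. x \<in> topspace T \<Longrightarrow> g x \<in> sphere2 \<and> 0 \<le> \<tau> x \<and> \<tau> x \<le> 1"
  shows "coordwise_continuous T (\<lambda>x. hom2 (\<tau> x) (g x))"
  unfolding hom2_def hom2_raw_def
proof (intro coordwise_continuous_normalize2 coordwise_continuous_tilt coordwise_continuous_restrict)
  fix v show "continuous_map T euclideanreal (\<lambda>x. hom2_scale (\<tau> x) (g x) * untilt (g x) v +
    hom2_shift (\<tau> x) (g x))"
    using S by (intro continuous_intros continuous_map_hom2_scale continuous_map_hom2_shift t g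
      coordwise_continuousD[OF coordwise_continuous_untilt[OF g]]) simp_all
next
  fix x assume x: "x \<in> topspace T"
  obtain v where "v \<in> U" "hom2_raw (\<tau> x) (g x) v \<noteq> 0" using hom2_raw_nonzero S[OF x] by blast
  then show "sqnorm (tilt (restrict
      (\<lambda>v. hom2_scale (\<tau> x) (g x) * untilt (g x) v + hom2_shift (\<tau> x) (g x)) U)) > 0"
    unfolding hom2_raw_def by (rule sqnorm_tilt_pos)
qed

end


section \<open>The join of the fibres and the wedge of spheres\<close>

text \<open>Barycentric coordinates on the join of the fibres of tgt, as discrete sets.\<close>
definition fibre_join :: "'e set \<Rightarrow> ('e \<Rightarrow> 'v) \<Rightarrow> ('e \<Rightarrow> real) set" where
  "fibre_join E tgt = {f. (\<forall>e. 0 \<le> f e) \<and> (\<forall>e. e \<notin> E \<longrightarrow> f e = 0) \<and>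
     (\<forall>e\<in>E. \<forall>e'\<in>E. f e \<noteq> 0 \<longrightarrow> f e' \<noteq> 0 \<longrightarrow> tgt e = tgt e' \<longrightarrow> e = e') \<and> sum f E = 1}"

text \<open>a chooses a base edge in every fibre, bj enumerates the choices of non-base edges (one
  sphere of the wedge for each), and pos enumerates U starting with v0 (the coordinates inside
  one sphere).\<close>
locale join_collapse = sphere_collapse U v0 for U :: "'v set" and v0 :: 'v +
  fixes E :: "'e set" and tgt :: "'e \<Rightarrow> 'v" and a :: "'v \<Rightarrow> 'e" and N :: nat
    and bj :: "nat \<Rightarrow> 'v \<Rightarrow> 'e" and pos :: "'v \<Rightarrow> nat"
  assumes finE: "finite E" and tgtU: "\<And>e. e \<in> E \<Longrightarrow> tgt e \<in> U"
    and aE: "\<And>v. v \<in> U \<Longrightarrow> a v \<in> E" and ta: "\<And>v. v \<in> U \<Longrightarrow> tgt (a v) = v"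
    and bj_bij: "bij_betw bj {0..<N} (PiE U (\<lambda>v. {e\<in>E. tgt e = v} - {a v}))"
    and pos_bij: "bij_betw pos U {0..<card U}" and pos_v0: "pos v0 = 0"
begin

definition fibre where "fibre v = {e\<in>E. tgt e = v}"
definition labels where "labels = PiE U (\<lambda>v. fibre v - {a v})"

definition branch_mass :: "('e \<Rightarrow> real) \<Rightarrow> 'v \<Rightarrow> real" where
  "branch_mass f v = (\<Sum>e\<in>fibre v - {a v}. f e)"
definition coords :: "('e \<Rightarrow> real) \<Rightarrow> 'v \<Rightarrow> real" where
  "coords f = restrict (\<lambda>v. branch_mass f v - f (a v)) U"

text \<open>Arbitrary at vertices where f puts no weight on a non-base edge.\<close>
definition label :: "('e \<Rightarrow> real) \<Rightarrow> 'v \<Rightarrow> 'e" where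
  "label f = restrict (\<lambda>v. SOME e. e \<in> fibre v - {a v} \<and> f e \<noteq> 0) U"

definition join_point :: "('v \<Rightarrow> real) \<Rightarrow> ('v \<Rightarrow> 'e) \<Rightarrow> 'e \<Rightarrow> real" where
  "join_point s b = (\<lambda>e. if e \<in> E then (if e = a (tgt e) then max 0 (- s (tgt e))
      else if e = b (tgt e) then max 0 (s (tgt e)) else 0) else 0)"
definition label_fits :: "('v \<Rightarrow> real) \<Rightarrow> ('v \<Rightarrow> 'e) \<Rightarrow> bool" where
  "label_fits s b \<longleftrightarrow> (\<forall>v\<in>U. s v > 0 \<longrightarrow> b v \<in> fibre v - {a v})"

lemma finite_fibre: "finite (fibre v)" unfolding fibre_def using finE by simp

lemma base_in_fibre: "v \<in> U \<Longrightarrow> a v \<in> fibre v" unfolding fibre_def using aE ta by simp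
lemma fibreD: "e \<in> fibre v \<Longrightarrow> e \<in> E \<and> tgt e = v" unfolding fibre_def by simp

lemma fibreI: "e \<in> E \<Longrightarrow> e \<in> fibre (tgt e)" unfolding fibre_def by simp

lemma sum_over_fibres: "(\<Sum>e\<in>E. h e) = (\<Sum>v\<in>U. \<Sum>e\<in>fibre v. h e)"
proof -
  have "tgt ` E \<subseteq> U" using tgtU by auto
  then have "(\<Sum>v\<in>U. sum h {e. e \<in> E \<and> tgt e = v}) = sum h E"
    by (intro sum.group finE finU)
  then show ?thesis unfolding fibre_def by simp
qed

lemma sum_fibre_split_base: "v \<in> U \<Longrightarrow> (\<Sum>e\<in>fibre v. h e) = h (a v) + (\<Sum>e\<in>fibre v - {a v}. h e)"
  using base_in_fibre finite_fibre by (simp add: sum.remove)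

lemma join_point_base: "v \<in> U \<Longrightarrow> join_point s b (a v) = max 0 (- s v)"
  unfolding join_point_def using aE ta by simp

lemma join_point_branch:
  "v \<in> U \<Longrightarrow> e \<in> fibre v - {a v} \<Longrightarrow> join_point s b e = (if e = b v then max 0 (s v) else 0)"
  unfolding join_point_def using fibreD by auto

lemma join_point_outside: "e \<notin> E \<Longrightarrow> join_point s b e = 0"
  unfolding join_point_def by simp

lemma branch_mass_join_point:
  assumes "label_fits s b" "v \<in> U"
  shows "branch_mass (join_point s b) v = max 0 (s v)"
proof -
  have "branch_mass (join_point s b) v = (\<Sum>e\<in>fibre v - {a v}. if e = b v then max 0 (s v) else 0)"
    unfolding branch_mass_def using assms(2) by (intro sum.cong) (simp_all add: join_point_branch)
  also have "\<dots> = (if b v \<in> fibre v - {a v} then max 0 (s v) else 0)"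
    using finite_fibre by (simp add: sum.delta)
  also have "\<dots> = max 0 (s v)" using assms unfolding label_fits_def by auto
  finally show ?thesis .
qed

lemma coords_join_point:
  assumes "s \<in> extensional U" "label_fits s b" shows "coords (join_point s b) = s"
proof
  fix v show "coords (join_point s b) v = s v"
  proof (cases "v \<in> U")
    case True then show ?thesis unfolding coords_def
      using branch_mass_join_point[OF assms(2) True] join_point_base[OF True] by simp
  next
    case False then show ?thesis unfolding coords_def using assms(1) by (simp add: extensional_def)
  qed
qed

lemma sum_join_point:
  assumes "label_fits s b" shows "(\<Sum>e\<in>E. join_point s b e) = norm1 s"
proof -
  have "(\<Sum>e\<in>E. join_point s b e) = (\<Sum>v\<in>U. \<Sum>e\<in>fibre v. join_point s b e)"
    by (rule sum_over_fibres)
  also have "\<dots> = (\<Sum>v\<in>U. \<bar>s v\<bar>)"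
  proof (rule sum.cong)
    fix v assume v: "v \<in> U"
    have "(\<Sum>e\<in>fibre v. join_point s b e) = max 0 (- s v) + branch_mass (join_point s b) v"
      unfolding branch_mass_def by (subst sum_fibre_split_base[OF v]) (simp add: join_point_base[OF v])
    also have "\<dots> = \<bar>s v\<bar>" using branch_mass_join_point[OF assms v] by simp
    finally show "(\<Sum>e\<in>fibre v. join_point s b e) = \<bar>s v\<bar>" .
  qed simp
  finally show ?thesis unfolding norm1_def .
qed

lemma join_point_nonzeroD:
  assumes v: "v \<in> U" "e \<in> fibre v" and nz: "join_point s b e \<noteq> 0"
  shows "(e = a v \<and> s v < 0) \<or> (e = b v \<and> e \<noteq> a v \<and> s v > 0)"
proof (cases "e = a v")
  case True
  then have "max 0 (- s v) \<noteq> 0" using nz join_point_base[OF v(1)] by simp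
  then have "s v < 0" by linarith
  then show ?thesis using True by simp
next
  case False
  then have e': "e \<in> fibre v - {a v}" using v by simp
  have "(if e = b v then max 0 (s v) else 0) \<noteq> 0" using nz join_point_branch[OF v(1) e'] by simp
  then have "e = b v" "max 0 (s v) \<noteq> 0" by (simp_all split: if_splits)
  then show ?thesis using False by linarith
qed

lemma join_point_nonneg: "0 \<le> join_point s b e" unfolding join_point_def by simp

lemma join_point_in_fibre_join:
  assumes "s \<in> sphere1" "label_fits s b"
  shows "join_point s b \<in> fibre_join E tgt"
proof -
  have unique: "e = e'" if "e \<in> E" "e' \<in> E" "join_point s b e \<noteq> 0" "join_point s b e' \<noteq> 0"
    "tgt e = tgt e'" for e e'
  proof -
    define v where "v = tgt e"
    have v: "v \<in> U" "e \<in> fibre v" "e' \<in> fibre v" using that tgtU unfolding v_def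
      by (simp_all add: fibre_def)
    have c1: "(e = a v \<and> s v < 0) \<or> (e = b v \<and> e \<noteq> a v \<and> s v > 0)"
      by (rule join_point_nonzeroD[OF v(1,2) that(3)])
    have c2: "(e' = a v \<and> s v < 0) \<or> (e' = b v \<and> e' \<noteq> a v \<and> s v > 0)"
      by (rule join_point_nonzeroD[OF v(1,3) that(4)])
    show ?thesis using c1 c2 by auto
  qed
  have "sum (join_point s b) E = 1" using sum_join_point[OF assms(2)] assms(1)
    unfolding sphere1_def by simp
  moreover have "\<forall>e. 0 \<le> join_point s b e" using join_point_nonneg by blast
  moreover have "\<forall>e. e \<notin> E \<longrightarrow> join_point s b e = 0"
    using join_point_outside by blast
  ultimately show ?thesis unfolding fibre_join_def using unique by blast
qed

lemma fibre_join_nonneg: "f \<in> fibre_join E tgt \<Longrightarrow> 0 \<le> f e"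
  unfolding fibre_join_def by simp

lemma fibre_join_outside: "f \<in> fibre_join E tgt \<Longrightarrow> e \<notin> E \<Longrightarrow> f e = 0"
  unfolding fibre_join_def by simp

lemma fibre_join_sum: "f \<in> fibre_join E tgt \<Longrightarrow> sum f E = 1"
  unfolding fibre_join_def by simp

lemma fibre_join_unique:
  assumes "f \<in> fibre_join E tgt" "e \<in> fibre v" "e' \<in> fibre v" "f e \<noteq> 0" "f e' \<noteq> 0"
  shows "e = e'"
proof -
  have "e \<in> E" "e' \<in> E" "tgt e = tgt e'" using fibreD assms(2,3) by auto
  then show ?thesis using assms(1,4,5) unfolding fibre_join_def by blast
qed

lemma label_eqI:
  assumes f: "f \<in> fibre_join E tgt" and v: "v \<in> U" and e: "e \<in> fibre v - {a v}" "f e \<noteq> 0"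
  shows "label f v = e"
proof -
  have "\<exists>e. e \<in> fibre v - {a v} \<and> f e \<noteq> 0" using e by blast
  from someI_ex[OF this] have "label f v \<in> fibre v - {a v} \<and> f (label f v) \<noteq> 0"
    using v by (simp add: label_def)
  then show ?thesis using fibre_join_unique[OF f] e by blast
qed

lemma fibre_join_on_fibre:
  assumes f: "f \<in> fibre_join E tgt" and v: "v \<in> U"
  shows "(\<forall>e\<in>fibre v. f e = join_point (coords f) (label f) e) \<and>
    (coords f v > 0 \<longrightarrow> label f v \<in> fibre v - {a v})"
proof (cases "\<exists>e\<in>fibre v - {a v}. f e \<noteq> 0")
  case True
  then obtain e1 where e1: "e1 \<in> fibre v - {a v}" "f e1 \<noteq> 0" by blast
  have others: "\<And>e. e \<in> fibre v \<Longrightarrow> e \<noteq> e1 \<Longrightarrow> f e = 0"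
    using fibre_join_unique[OF f] e1 by blast
  have "branch_mass f v = f e1"
    unfolding branch_mass_def using finite_fibre e1 others by (simp add: sum.remove)
  moreover have base: "f (a v) = 0" using others base_in_fibre[OF v] e1 by blast
  ultimately have coord: "coords f v = f e1" unfolding coords_def using v by simp
  have pos: "f e1 > 0" using fibre_join_nonneg[OF f, of e1] e1 by simp
  have "f e = join_point (coords f) (label f) e" if e: "e \<in> fibre v" for e
  proof (cases "e = a v")
    case True
    then show ?thesis using base coord pos by (simp add: join_point_base[OF v])
  next
    case False
    then have "e \<in> fibre v - {a v}" using e by simp
    from join_point_branch[OF v this] show ?thesis
      using label_eqI[OF f v e1] others[OF e] coord pos by auto
  qed
  then show ?thesis using label_eqI[OF f v e1] e1 by blast
next
  case False
  then have coord: "coords f v = - f (a v)" unfolding coords_def branch_mass_def using v by simp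
  have "f e = join_point (coords f) (label f) e" if e: "e \<in> fibre v" for e
  proof (cases "e = a v")
    case True
    then show ?thesis using coord fibre_join_nonneg[OF f] by (simp add: join_point_base[OF v])
  next
    case False
    then have branch: "e \<in> fibre v - {a v}" using e by simp
    from join_point_branch[OF v branch] show ?thesis
      using branch \<open>\<not> (\<exists>e\<in>fibre v - {a v}. f e \<noteq> 0)\<close> coord
        fibre_join_nonneg[OF f, of "a v"] by auto
  qed
  then show ?thesis using coord fibre_join_nonneg[OF f, of "a v"] by simp
qed

lemma fibre_join_eq_join_point:
  assumes f: "f \<in> fibre_join E tgt"
  shows "f = join_point (coords f) (label f)" "label_fits (coords f) (label f)"
proof -
  show "f = join_point (coords f) (label f)"
  proof
    fix e show "f e = join_point (coords f) (label f) e"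
    proof (cases "e \<in> E")
      case True
      then show ?thesis using fibre_join_on_fibre[OF f tgtU[OF True]] fibreI[OF True] by blast
    next
      case False
      then show ?thesis using fibre_join_outside[OF f] join_point_outside by simp
    qed
  qed
  show "label_fits (coords f) (label f)" unfolding label_fits_def using fibre_join_on_fibre[OF f] by blast
qed

lemma coords_extensional: "coords f \<in> extensional U" unfolding coords_def by simp

lemma label_extensional: "label f \<in> extensional U" unfolding label_def by simp

lemma coords_in_sphere1:
  assumes f: "f \<in> fibre_join E tgt" shows "coords f \<in> sphere1"
proof -
  have "norm1 (coords f) = (\<Sum>e\<in>E. join_point (coords f) (label f) e)"
    using sum_join_point[OF fibre_join_eq_join_point(2)[OF f]] by simp
  also have "\<dots> = sum f E" using fibre_join_eq_join_point(1)[OF f] by simp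
  finally show ?thesis unfolding sphere1_def using fibre_join_sum[OF f] coords_extensional by simp
qed

text \<open>The scale of hom1 is nonnegative, so a coordinate can only become positive through a
  positive shift; this needs facet_weight s > 0, and then all coordinates of s are positive
  already.  So labels stay valid along hom1, which is what lets it lift to the join.\<close>
lemma label_fits_hom1:
  assumes s: "s \<in> sphere1" "label_fits s b" and t: "0 \<le> t" "t \<le> 1"
  shows "label_fits (hom1 t s) b"
  unfolding label_fits_def
proof (intro ballI impI)
  fix v assume v: "v \<in> U" and p: "hom1 t s v > 0"
  have y: "hom1_scale t s * s v + hom1_shift t s > 0" using hom1_pos_iff[OF s(1) t v] p by simp
  have "s v > 0"
  proof (cases "hom1_shift t s > 0")
    case True
    then have "facet_weight s > 0" using hom1_shift_posD t by blast
    then have "s v > 1 / (2 * kU)" using facet_weight_posD v by blast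
    then show ?thesis using kU_pos by (smt (verit) divide_pos_pos)
  next
    case False
    have "hom1_scale t s \<ge> 0" using hom1_scale_nonneg t by blast
    then show ?thesis using y False by (smt (verit) mult_nonneg_nonpos)
  qed
  then show "b v \<in> fibre v - {a v}" using s(2) v unfolding label_fits_def by blast
qed

definition mu :: real where "mu = 1 / (2 * kU)"

lemma mu_pos: "mu > 0" unfolding mu_def using kU_pos by simp

text \<open>The lift of hom1 to the join.  It is defined without reference to labels, so that it is
  continuous: on a branch edge the factor f e / max (branch_mass f v) mu is 1 on the edge
  carrying the branch mass whenever the positive part of the shift is active, since then
  s v > mu.\<close>
definition homX :: "real \<Rightarrow> ('e \<Rightarrow> real) \<Rightarrow> 'e \<Rightarrow> real" where
  "homX t f = (\<lambda>e. if e \<in> E then (if e = a (tgt e)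
       then max 0 (- hom1_raw t (coords f) (tgt e))
       else max 0 (hom1_scale t (coords f) * f e
              + max 0 (hom1_shift t (coords f)) * (f e / max (branch_mass f (tgt e)) mu)
              - max 0 (- hom1_shift t (coords f)))) / norm1 (hom1_raw t (coords f))
     else 0)"

lemma branch_rescale_join_point:
  assumes b: "label_fits s b" and v: "v \<in> U" "e \<in> fibre v - {a v}"
    and A: "A \<ge> 0" and B: "B > 0 \<longrightarrow> s v > mu"
  shows "max 0 (A * join_point s b e
      + max 0 B * (join_point s b e / max (branch_mass (join_point s b) v) mu) - max 0 (- B))
    = (if e = b v then max 0 (A * s v + B) else 0)"
proof (cases "e = b v \<and> s v > 0")
  case True
  moreover have "B > 0 \<Longrightarrow> s v / max (s v) mu = 1" using B mu_pos by simp
  ultimately show ?thesis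
    using join_point_branch[OF v] branch_mass_join_point[OF b v(1)] A
    by (cases "B > 0") (simp_all add: max_def)
next
  case False
  moreover have "s v \<le> 0 \<Longrightarrow> A * s v \<le> 0 \<and> \<not> B > 0" using A B mu_pos
    by (smt (verit) mult_nonneg_nonpos)
  ultimately show ?thesis using join_point_branch[OF v] by auto
qed

lemma homX_join_point:
  assumes s: "s \<in> sphere1" "label_fits s b" and t: "0 \<le> t" "t \<le> 1"
  shows "homX t (join_point s b) = join_point (hom1 t s) b"
proof
  fix e
  have coords: "coords (join_point s b) = s" using coords_join_point s unfolding sphere1_def by blast
  have n: "norm1 (hom1_raw t s) > 0" using norm1_hom1_raw_pos[OF s(1) t] .
  have hom1_at: "hom1 t s v = hom1_raw t s v / norm1 (hom1_raw t s)" if "v \<in> U" for v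
    unfolding hom1_def normalize1_def using that by simp
  have raw_at: "hom1_raw t s v = hom1_scale t s * s v + hom1_shift t s" if "v \<in> U" for v
    unfolding hom1_raw_def using that by simp
  show "homX t (join_point s b) e = join_point (hom1 t s) b e"
  proof (cases "e \<in> E")
    case False then show ?thesis unfolding homX_def join_point_def by simp
  next
    case True
    define v where "v = tgt e"
    have v: "v \<in> U" "e \<in> fibre v" unfolding v_def using tgtU[OF True] fibreI[OF True] by auto
    show ?thesis
    proof (cases "e = a v")
      case True
      then have "homX t (join_point s b) e = max 0 (- hom1_raw t s v) / norm1 (hom1_raw t s)"
        unfolding homX_def using \<open>e \<in> E\<close> coords v_def by simp
      then show ?thesis
        using True n by (simp add: join_point_base[OF v(1)] hom1_at[OF v(1)] max_divide_distrib_right)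
    next
      case False
      then have branch: "e \<in> fibre v - {a v}" using v by simp
      have mu_bound: "hom1_shift t s > 0 \<longrightarrow> s v > mu"
        using hom1_shift_posD[of t s] t facet_weight_posD[OF _ v(1), of s] unfolding mu_def by blast
      note rescale = branch_rescale_join_point[OF s(2) v(1) branch hom1_scale_nonneg[OF t] mu_bound]
      have "homX t (join_point s b) e = max 0 (hom1_scale t s * join_point s b e
          + max 0 (hom1_shift t s) * (join_point s b e / max (branch_mass (join_point s b) v) mu)
          - max 0 (- hom1_shift t s)) / norm1 (hom1_raw t s)"
        unfolding homX_def using \<open>e \<in> E\<close> False coords v_def by simp
      also have "\<dots> = (if e = b v then max 0 (hom1_raw t s v) else 0) / norm1 (hom1_raw t s)"
        unfolding rescale raw_at[OF v(1)] ..
      also have "\<dots> = join_point (hom1 t s) b e"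
        using n by (simp add: join_point_branch[OF v(1) branch] hom1_at[OF v(1)]
          max_divide_distrib_right)
      finally show ?thesis .
    qed
  qed
qed

text \<open>The i-th sphere of the wedge occupies the coordinates [i card U, (i+1) card U); the point z
  of sphere2, shifted by the v0-axis, sits there as wedge_point i z, so that pole2 becomes the
  wedge point 0.  block w i reads z back.\<close>
definition vertex_at :: "nat \<Rightarrow> 'v" where "vertex_at = inv_into U pos"
definition wedge_point :: "nat \<Rightarrow> ('v \<Rightarrow> real) \<Rightarrow> nat \<Rightarrow> real" where
  "wedge_point i z = (\<lambda>n. if n div card U = i
     then (if n mod card U = 0 then 1 else 0) + z (vertex_at (n mod card U)) else 0)"
definition block :: "(nat \<Rightarrow> real) \<Rightarrow> nat \<Rightarrow> 'v \<Rightarrow> real" where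
  "block w j = restrict (\<lambda>v. w (j * card U + pos v) - (if v = v0 then 1 else 0)) U"
definition wedge_set :: "(nat \<Rightarrow> real) set" where
  "wedge_set = wedge_spheres_set N (int (card U) - 1)"
definition label_index where "label_index = inv_into {0..<N} bj"

text \<open>The product is a continuous selector of the sphere: it is 1 for the sphere of the labels
  of f and 0 for the others whenever facet_weight (coords f) > 0, and otherwise the collapsed
  point is the wedge point anyway.\<close>
definition to_wedge :: "('e \<Rightarrow> real) \<Rightarrow> nat \<Rightarrow> real" where
  "to_wedge f = (\<lambda>n. if n < N * card U
     then (\<Prod>v\<in>U. f (bj (n div card U) v) / max (branch_mass f v) mu) *
       ((if n mod card U = 0 then 1 else 0) + collapse (coords f) (vertex_at (n mod card U)))
     else 0)"

text \<open>All blocks but one are at pole2, which expand sends to the constant pole1 = -1/kU; the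
  term (N - 1)/kU cancels their contribution.\<close>
definition from_wedge :: "(nat \<Rightarrow> real) \<Rightarrow> 'e \<Rightarrow> real" where
  "from_wedge w = (\<lambda>e. if e \<in> E then (if e = a (tgt e)
      then max 0 (- ((\<Sum>j<N. expand (block w j) (tgt e)) + (real N - 1) / kU))
      else (\<Sum>j<N. if bj j (tgt e) = e then max 0 (expand (block w j) (tgt e)) else 0)) else 0)"

definition homW :: "real \<Rightarrow> (nat \<Rightarrow> real) \<Rightarrow> nat \<Rightarrow> real" where
  "homW t w = (\<lambda>n. if n < N * card U
     then (if n mod card U = 0 then 1 else 0)
       + hom2 t (block w (n div card U)) (vertex_at (n mod card U))
     else 0)"

lemma card_U_pos: "card U > 0" using finU U_nonempty by (simp add: card_gt_0_iff)

lemma pos_less: "v \<in> U \<Longrightarrow> pos v < card U" using pos_bij unfolding bij_betw_def by auto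

lemma vertex_at_pos: "v \<in> U \<Longrightarrow> vertex_at (pos v) = v"
  unfolding vertex_at_def using pos_bij by (simp add: bij_betw_def)

lemma vertex_at_in_U:
  assumes "p < card U" shows "vertex_at p \<in> U"
proof -
  have "p \<in> pos ` U" using pos_bij assms unfolding bij_betw_def by auto
  then show ?thesis unfolding vertex_at_def by (rule inv_into_into)
qed

lemma pos_vertex_at:
  assumes "p < card U" shows "pos (vertex_at p) = p"
proof -
  have "p \<in> pos ` U" using pos_bij assms unfolding bij_betw_def by auto
  then show ?thesis unfolding vertex_at_def by (rule f_inv_into_f)
qed

lemma pos_inj: "v \<in> U \<Longrightarrow> w \<in> U \<Longrightarrow> pos v = pos w \<Longrightarrow> v = w"
  using pos_bij unfolding bij_betw_def inj_on_def by blast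

lemma pos_eq_0_iff:
  assumes "v \<in> U" shows "pos v = 0 \<longleftrightarrow> v = v0"
proof
  assume "pos v = 0" then have "pos v = pos v0" using pos_v0 by simp
  then show "v = v0" using pos_inj[OF assms v0U] by simp
qed (simp add: pos_v0)
lemma vertex_at_eq_v0_iff:
  assumes "p < card U" shows "vertex_at p = v0 \<longleftrightarrow> p = 0"
proof -
  have "vertex_at p \<in> U" "pos (vertex_at p) = p"
    using vertex_at_in_U[OF assms] pos_vertex_at[OF assms] by auto
  then show ?thesis using pos_eq_0_iff[of "vertex_at p"] by auto
qed

lemma block_offset_div: "v \<in> U \<Longrightarrow> (j * card U + pos v) div card U = j"
  using pos_less card_U_pos by simp

lemma block_offset_mod: "v \<in> U \<Longrightarrow> (j * card U + pos v) mod card U = pos v"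
  using pos_less card_U_pos by simp

lemma wedge_point_at:
  "v \<in> U \<Longrightarrow>
    wedge_point i z (j * card U + pos v) = (if j = i then (if v = v0 then 1 else 0) + z v else 0)"
  unfolding wedge_point_def using block_offset_div block_offset_mod vertex_at_pos pos_eq_0_iff by simp

lemma block_wedge_point:
  assumes "z \<in> extensional U"
  shows "block (wedge_point i z) j = (if j = i then z else pole2)"
proof
  fix v show "block (wedge_point i z) j v = (if j = i then z else pole2) v"
    using assms unfolding block_def pole2_def
      by (cases "v \<in> U") (simp_all add: wedge_point_at extensional_def)
qed

lemma block_zero: "block (\<lambda>_. 0) j = pole2"
  unfolding block_def pole2_def by (intro restrict_ext) simp

lemma wedge_point_pole2: "wedge_point i pole2 = (\<lambda>_. 0)"
proof
  fix n
  have "n mod card U < card U" using card_U_pos by simp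
  then show "wedge_point i pole2 n = 0"
    unfolding wedge_point_def pole2_def using vertex_at_in_U vertex_at_eq_v0_iff by simp
qed

lemma pole2_in_sphere2: "pole2 \<in> sphere2"
proof -
  have "sqnorm pole2 = (pole2 v0)^2 + (\<Sum>u\<in>U-{v0}. (pole2 u)^2)" unfolding sqnorm_def
    by (rule sum_U_split_v0)
  also have "(\<Sum>u\<in>U-{v0}. (pole2 u)^2) = 0" by (intro sum.neutral) (simp add: pole2_def)
  also have "pole2 v0 = -1" using v0U by (simp add: pole2_def)
  finally have "sqnorm pole2 = 1" by simp
  moreover have "pole2 \<in> extensional U" unfolding pole2_def by simp
  ultimately show ?thesis unfolding sphere2_def by simp
qed

lemma sqnorm_block:
  "sqnorm (block w i) = (w (i * card U) - 1)^2 + (\<Sum>j\<in>{i * card U<..<(i + 1) * card U}. (w j)^2)"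
proof -
  define g where "g p = (w (i * card U + p) - (if p = 0 then 1 else 0))^2" for p
  have "sqnorm (block w i) = (\<Sum>v\<in>U. g (pos v))"
    unfolding sqnorm_def block_def g_def by (intro sum.cong) (simp_all add: pos_eq_0_iff)
  also have "\<dots> = (\<Sum>p\<in>{0..<card U}. g p)"
    using pos_bij by (rule sum.reindex_bij_betw)
  also have "\<dots> = g 0 + (\<Sum>p\<in>{Suc 0..<card U}. g p)" using card_U_pos
    by (simp add: sum.atLeast_Suc_lessThan)
  also have "(\<Sum>p\<in>{Suc 0..<card U}. g p) = (\<Sum>p\<in>{Suc 0..<card U}. (w (p + i * card U))^2)"
    unfolding g_def by (intro sum.cong) (simp_all add: add.commute)
  also have "\<dots> = (\<Sum>j\<in>{Suc 0 + i * card U..<card U + i * card U}. (w j)^2)"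
    by (rule sum.shift_bounds_nat_ivl[symmetric])
  also have "{Suc 0 + i * card U..<card U + i * card U} = {i * card U<..<(i + 1) * card U}"
    by (auto simp: add.commute)
  finally show ?thesis unfolding g_def by simp
qed

lemma wedge_set_eq:
  "wedge_set = insert (\<lambda>_. 0) {x. \<exists>i<N. (\<forall>j. j \<notin> {i * card U..<(i + 1) * card U} \<longrightarrow> x j = 0) \<and>
     (x (i * card U) - 1)^2 + (\<Sum>j\<in>{i * card U<..<(i + 1) * card U}. (x j)^2) = 1}"
proof -
  have "\<not> int (card U) - 1 < 0" using card_U_pos by simp
  moreover have "nat (int (card U) - 1) + 1 = card U" using card_U_pos by simp
  ultimately show ?thesis unfolding wedge_set_def wedge_spheres_set_def Let_def by simp
qed

lemma div_eq_iff_in_block: "(n div card U = i) \<longleftrightarrow> n \<in> {i * card U..<(i + 1) * card U}"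
proof
  assume h: "n div card U = i"
  have e: "n = i * card U + n mod card U" using div_mult_mod_eq[of n "card U"] h by simp
  have "n mod card U < card U" using card_U_pos by simp
  then show "n \<in> {i * card U..<(i + 1) * card U}" using e by (simp del: div_mult_mod_eq)
next
  assume "n \<in> {i * card U..<(i + 1) * card U}"
  then have "card U * i \<le> n" "n < card U * Suc i" by (simp_all add: mult.commute)
  then show "n div card U = i" by (rule div_nat_eqI)
qed

lemma wedge_point_in_wedge_set:
  assumes i: "i < N" and z: "z \<in> sphere2"
  shows "wedge_point i z \<in> wedge_set"
proof -
  have ze: "z \<in> extensional U" using z unfolding sphere2_def by simp
  have supp: "\<forall>j. j \<notin> {i * card U..<(i + 1) * card U} \<longrightarrow> wedge_point i z j = 0"
    unfolding wedge_point_def using div_eq_iff_in_block by simp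
  have "sqnorm (block (wedge_point i z) i) = 1" using block_wedge_point[OF ze] z
    unfolding sphere2_def by simp
  then have "(wedge_point i z (i * card U) - 1)^2
      + (\<Sum>j\<in>{i * card U<..<(i + 1) * card U}. (wedge_point i z j)^2) = 1"
    using sqnorm_block by simp
  then show ?thesis unfolding wedge_set_eq using i supp by blast
qed

lemma zero_in_wedge_set: "(\<lambda>_. 0) \<in> wedge_set" unfolding wedge_set_eq by simp

lemma wedge_set_cases:
  assumes w: "w \<in> wedge_set"
  shows "w = (\<lambda>_. 0) \<or> (\<exists>i<N. block w i \<in> sphere2 \<and> w = wedge_point i (block w i))"
proof (cases "w = (\<lambda>_. 0)")
  case False
  then obtain i where i: "i < N" and supp: "\<forall>j. j \<notin> {i * card U..<(i + 1) * card U} \<longrightarrow> w j = 0"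
    and on_sphere: "(w (i * card U) - 1)^2 + (\<Sum>j\<in>{i * card U<..<(i + 1) * card U}. (w j)^2) = 1"
    using w unfolding wedge_set_eq by blast
  have in_sphere2: "block w i \<in> sphere2" unfolding sphere2_def using sqnorm_block on_sphere
    by (simp add: block_def)
  have "w = wedge_point i (block w i)"
  proof
    fix n show "w n = wedge_point i (block w i) n"
    proof (cases "n div card U = i")
      case True
      define p where "p = n mod card U"
      have p: "p < card U" unfolding p_def using card_U_pos by simp
      have n: "n = i * card U + pos (vertex_at p)"
        using div_mult_mod_eq[of n "card U"] True pos_vertex_at[OF p]
        unfolding p_def by simp
      show ?thesis unfolding wedge_point_def block_def
        using True p vertex_at_in_U[OF p] vertex_at_eq_v0_iff[OF p] n
        unfolding p_def[symmetric] by simp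
    next
      case False
      then have "n \<notin> {i * card U..<(i + 1) * card U}" using div_eq_iff_in_block by blast
      then have "w n = 0" using supp by blast
      then show ?thesis unfolding wedge_point_def using False by simp
    qed
  qed
  then show ?thesis using i in_sphere2 by blast
qed simp

lemma block_in_sphere2:
  assumes "w \<in> wedge_set" shows "block w j \<in> sphere2"
proof -
  consider "w = (\<lambda>_. 0)" | i where "i < N" "block w i \<in> sphere2" "w = wedge_point i (block w i)"
    using wedge_set_cases[OF assms] by blast
  then show ?thesis
  proof cases
    case 1 then show ?thesis using block_zero pole2_in_sphere2 by simp
  next
    case 2
    have "block w j = block (wedge_point i (block w i)) j" using 2 by simp
    also have "\<dots> = (if j = i then block w i else pole2)"
      by (rule block_wedge_point) (simp add: block_def)
    finally show ?thesis using 2 pole2_in_sphere2 by simp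
  qed
qed

lemma expand_pole2_at: "v \<in> U \<Longrightarrow> expand pole2 v = -1/kU"
  using expand_pole2 by (simp add: pole1_def)

lemma sphere2_extensional: "z \<in> sphere2 \<Longrightarrow> z \<in> extensional U"
  unfolding sphere2_def by simp

lemma from_wedge_wedge_point:
  assumes i: "i < N" and z: "z \<in> sphere2"
  shows "from_wedge (wedge_point i z) = join_point (expand z) (bj i)"
proof
  fix e
  have blocks: "\<And>j. block (wedge_point i z) j = (if j = i then z else pole2)"
    using block_wedge_point sphere2_extensional[OF z] by blast
  show "from_wedge (wedge_point i z) e = join_point (expand z) (bj i) e"
  proof (cases "e \<in> E")
    case False then show ?thesis unfolding from_wedge_def join_point_def by simp
  next
    case True
    define v where "v = tgt e"
    have v: "v \<in> U" unfolding v_def using tgtU True by simp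
    have "(\<Sum>j<N. expand (block (wedge_point i z) j) v) = (\<Sum>j<N. if j = i then expand z v else -1/kU)"
      by (intro sum.cong) (simp_all add: blocks expand_pole2_at[OF v])
    also have "\<dots> = expand z v + (real N - 1) * (-1/kU)" by (rule sum_if_eq_index[OF i])
    finally have base_sum: "(\<Sum>j<N. expand (block (wedge_point i z) j) v) + (real N - 1) / kU = expand z v"
      by (simp add: field_simps)
    have branch_sum: "(\<Sum>j<N. if bj j v = e then max 0 (expand (block (wedge_point i z) j) v) else 0) =
              (if bj i v = e then max 0 (expand z v) else 0)"
    proof -
      have "(\<Sum>j<N. if bj j v = e then max 0 (expand (block (wedge_point i z) j) v) else 0) =
            (\<Sum>j<N. if j = i then (if bj i v = e then max 0 (expand z v) else 0) else 0)"
        using kU_pos by (intro sum.cong) (simp_all add: blocks expand_pole2_at[OF v])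
      also have "\<dots> = (if bj i v = e then max 0 (expand z v) else 0)"
        by (simp add: sum_if_eq_index[OF i])
      finally show ?thesis .
    qed
    show ?thesis
    proof (cases "e = a v")
      case True
      then show ?thesis unfolding from_wedge_def join_point_def using \<open>e \<in> E\<close> base_sum
        unfolding v_def[symmetric] by simp
    next
      case False
      then show ?thesis unfolding from_wedge_def join_point_def using \<open>e \<in> E\<close> branch_sum
        unfolding v_def[symmetric] by auto
    qed
  qed
qed

lemma from_wedge_zero: "from_wedge (\<lambda>_. 0) = join_point pole1 b"
proof
  fix e
  show "from_wedge (\<lambda>_. 0) e = join_point pole1 b e"
  proof (cases "e \<in> E")
    case False then show ?thesis unfolding from_wedge_def join_point_def by simp
  next
    case True
    define v where "v = tgt e"
    have v: "v \<in> U" unfolding v_def using tgtU True by simp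
    have base_sum: "(\<Sum>j<N. expand (block (\<lambda>_. 0) j) v) + (real N - 1) / kU = - 1 / kU"
      using block_zero expand_pole2_at[OF v] kU_pos by (simp add: field_simps)
    have branch_sum: "(\<Sum>j<N. if bj j v = e then max 0 (expand (block (\<lambda>_. 0) j) v) else 0) = 0"
      using block_zero expand_pole2_at[OF v] kU_pos by (intro sum.neutral) simp
    have pv: "pole1 v = -1/kU" using v by (simp add: pole1_def)
    show ?thesis
      unfolding from_wedge_def join_point_def using \<open>e \<in> E\<close> base_sum branch_sum pv kU_pos
        unfolding v_def[symmetric] by simp
  qed
qed

lemma labels_eq: "labels = PiE U (\<lambda>v. {e\<in>E. tgt e = v} - {a v})" unfolding labels_def fibre_def ..

lemma bj_in_labels: "j < N \<Longrightarrow> bj j \<in> labels"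
  using bj_bij unfolding labels_eq bij_betw_def by auto

lemma label_index_bj: "j < N \<Longrightarrow> label_index (bj j) = j"
  unfolding label_index_def using bj_bij by (simp add: bij_betw_inv_into_left)

lemma bj_label_index: "b \<in> labels \<Longrightarrow> bj (label_index b) = b"
  unfolding label_index_def using bj_bij labels_eq by (simp add: bij_betw_inv_into_right)

lemma label_index_less: "b \<in> labels \<Longrightarrow> label_index b < N"
proof -
  assume b: "b \<in> labels"
  have "label_index b \<in> {0..<N}" unfolding label_index_def using bj_bij b labels_eq
    by (metis bij_betw_def inv_into_into)
  then show ?thesis by simp
qed

lemma label_fits_bj: "j < N \<Longrightarrow> label_fits s (bj j)"
  using bj_in_labels unfolding label_fits_def labels_def by auto

lemma pole2_block_offset: "p < card U \<Longrightarrow> (if p = 0 then 1 else 0) + pole2 (vertex_at p) = 0"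
  using vertex_at_in_U vertex_at_eq_v0_iff by (simp add: pole2_def)

lemma div_ge_N: "\<not> n < N * card U \<Longrightarrow> n div card U \<ge> N"
  using card_U_pos by (simp add: div_less_iff_less_mult[symmetric] not_less)

lemma div_less_N: "n < N * card U \<Longrightarrow> n div card U < N"
  using card_U_pos by (simp add: div_less_iff_less_mult)

lemma labels_if_facet_weight_pos:
  assumes "label_fits s b" "b \<in> extensional U" "facet_weight s > 0"
  shows "b \<in> labels"
proof -
  have "b v \<in> fibre v - {a v}" if v: "v \<in> U" for v
  proof -
    have "s v > 0" using facet_weight_posD[OF assms(3) v] kU_pos by (smt (verit) divide_pos_pos)
    then show ?thesis using assms(1) v unfolding label_fits_def by blast
  qed
  then show ?thesis unfolding labels_def using assms(2) by (simp add: PiE_iff)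
qed

lemma label_selector_join_point:
  assumes s: "label_fits s b" "facet_weight s > 0" and b: "b \<in> labels" and j: "j < N"
  shows "(\<Prod>v\<in>U. join_point s b (bj j v) / max (branch_mass (join_point s b) v) mu)
    = (if j = label_index b then 1 else 0)"
proof -
  have factor: "join_point s b (bj j v) / max (branch_mass (join_point s b) v) mu
      = (if bj j v = b v then 1 else 0)" if v: "v \<in> U" for v
  proof -
    have "s v > mu" using facet_weight_posD[OF s(2) v] unfolding mu_def .
    moreover have "bj j v \<in> fibre v - {a v}" using bj_in_labels[OF j] v unfolding labels_def by auto
    ultimately show ?thesis
      using mu_pos branch_mass_join_point[OF s(1) v] join_point_branch[OF v] by simp
  qed
  have "(\<forall>v\<in>U. bj j v = b v) \<longleftrightarrow> bj j = b"
    using bj_in_labels[OF j] b unfolding labels_def by (auto intro: PiE_ext)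
  also have "\<dots> \<longleftrightarrow> j = label_index b"
    using label_index_bj[OF j] bj_label_index[OF b] by auto
  finally show ?thesis by (simp add: prod.cong[OF refl factor] prod_indicator[OF finU])
qed

lemma to_wedge_join_point:
  assumes s: "s \<in> sphere1" "label_fits s b" and b: "b \<in> extensional U"
  shows "to_wedge (join_point s b)
    = (if facet_weight s > 0 then wedge_point (label_index b) (collapse s) else (\<lambda>_. 0))"
proof -
  have coords: "coords (join_point s b) = s" using coords_join_point s unfolding sphere1_def by blast
  show ?thesis
  proof (cases "facet_weight s > 0")
    case False
    then have "collapse s = pole2" using facet_weight_bounds[of s] collapse_facet_weight_0 by force
    then have "(if n mod card U = 0 then 1 else 0) + collapse s (vertex_at (n mod card U)) = 0" for n
      using pole2_block_offset card_U_pos by simp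
    then show ?thesis using False by (simp add: to_wedge_def coords fun_eq_iff)
  next
    case True
    have labels: "b \<in> labels" using labels_if_facet_weight_pos[OF s(2) b True] .
    have "to_wedge (join_point s b) n = wedge_point (label_index b) (collapse s) n" for n
    proof (cases "n < N * card U")
      case True
      then show ?thesis unfolding to_wedge_def wedge_point_def coords
        using label_selector_join_point[OF s(2) \<open>facet_weight s > 0\<close> labels div_less_N[OF True]] by simp
    next
      case False
      then have "n div card U \<noteq> label_index b" using div_ge_N label_index_less[OF labels] by force
      then show ?thesis unfolding to_wedge_def wedge_point_def using False by simp
    qed
    then show ?thesis using True by auto
  qed
qed

lemma homW_wedge_point:
  assumes i: "i < N" and z: "z \<in> sphere2" and t: "0 \<le> t" "t \<le> 1"
  shows "homW t (wedge_point i z) = wedge_point i (hom2 t z)"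
proof
  fix n
  have blocks: "\<And>j. block (wedge_point i z) j = (if j = i then z else pole2)"
    using block_wedge_point sphere2_extensional[OF z] by blast
  have p: "n mod card U < card U" using card_U_pos by simp
  show "homW t (wedge_point i z) n = wedge_point i (hom2 t z) n"
  proof (cases "n < N * card U")
    case True
    show ?thesis
    proof (cases "n div card U = i")
      case True
      then have "block (wedge_point i z) (n div card U) = z" using blocks by simp
      then have "homW t (wedge_point i z) n
          = (if n mod card U = 0 then 1 else 0) + hom2 t z (vertex_at (n mod card U))"
        unfolding homW_def using \<open>n < N * card U\<close> by simp
      then show ?thesis unfolding wedge_point_def using True by simp
    next
      case False
      then have "block (wedge_point i z) (n div card U) = pole2" using blocks by simp
      then have "homW t (wedge_point i z) n = 0"
        unfolding homW_def using \<open>n < N * card U\<close> hom2_pole2[OF t] pole2_block_offset[OF p]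
        by simp
      then show ?thesis unfolding wedge_point_def using False by simp
    qed
  next
    case False
    have "n div card U \<noteq> i" using div_ge_N[OF False] i by simp
    then show ?thesis unfolding homW_def wedge_point_def using False by simp
  qed
qed

lemma homW_zero:
  assumes t: "0 \<le> t" "t \<le> 1" shows "homW t (\<lambda>_. 0) = (\<lambda>_. 0)"
proof
  fix n
  have p: "n mod card U < card U" using card_U_pos by simp
  show "homW t (\<lambda>_. 0) n = 0" unfolding homW_def block_zero hom2_pole2[OF t]
    using pole2_block_offset[OF p] by simp
qed

lemma pole1_not_pos: "v \<in> U \<Longrightarrow> \<not> pole1 v > 0" using kU_pos by (simp add: pole1_def)

lemma label_fits_pole1: "label_fits pole1 b" unfolding label_fits_def using pole1_not_pos by blast

lemma homX_in_fibre_join: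
  assumes f: "f \<in> fibre_join E tgt" and t: "0 \<le> t" "t \<le> 1"
  shows "homX t f \<in> fibre_join E tgt"
proof -
  have "homX t f = homX t (join_point (coords f) (label f))"
    using fibre_join_eq_join_point(1)[OF f] by simp
  also have "\<dots> = join_point (hom1 t (coords f)) (label f)"
    using homX_join_point[OF coords_in_sphere1[OF f] fibre_join_eq_join_point(2)[OF f] t] .
  finally show ?thesis
    using join_point_in_fibre_join hom1_in_sphere1[OF coords_in_sphere1[OF f] t]
      label_fits_hom1[OF coords_in_sphere1[OF f] fibre_join_eq_join_point(2)[OF f] t] by simp
qed

lemma homX_0:
  assumes f: "f \<in> fibre_join E tgt" shows "homX 0 f = f"
proof -
  have "homX 0 f = homX 0 (join_point (coords f) (label f))"
    using fibre_join_eq_join_point(1)[OF f] by simp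
  also have "\<dots> = join_point (hom1 0 (coords f)) (label f)"
    using homX_join_point[OF coords_in_sphere1[OF f] fibre_join_eq_join_point(2)[OF f]] by simp
  also have "\<dots> = f" using hom1_0[OF coords_in_sphere1[OF f]] fibre_join_eq_join_point(1)[OF f] by simp
  finally show ?thesis .
qed

lemma homX_1:
  assumes f: "f \<in> fibre_join E tgt" shows "homX 1 f = from_wedge (to_wedge f)"
proof -
  define s where "s = coords f"
  define b where "b = label f"
  have s: "s \<in> sphere1" "label_fits s b" unfolding s_def b_def
    using coords_in_sphere1[OF f] fibre_join_eq_join_point(2)[OF f] by auto
  have f_eq: "f = join_point s b" unfolding s_def b_def using fibre_join_eq_join_point(1)[OF f] .
  have "homX 1 f = join_point (hom1 1 s) b" using f_eq homX_join_point[OF s] by simp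
  also have "\<dots> = join_point (expand (collapse s)) b" using hom1_1[OF s(1)] by simp
  finally have homX_f: "homX 1 f = join_point (expand (collapse s)) b" .
  have to_wedge_f:
    "to_wedge f = (if facet_weight s > 0 then wedge_point (label_index b) (collapse s) else (\<lambda>_. 0))"
    using f_eq to_wedge_join_point[OF s] label_extensional unfolding b_def by simp
  show ?thesis
  proof (cases "facet_weight s > 0")
    case True
    have b: "b \<in> labels" using labels_if_facet_weight_pos[OF s(2) _ True] label_extensional
      unfolding b_def by blast
    have "from_wedge (to_wedge f) = join_point (expand (collapse s)) (bj (label_index b))"
      using to_wedge_f True
        from_wedge_wedge_point[OF label_index_less[OF b] collapse_in_sphere2[OF s(1)]] by simp
    then show ?thesis using homX_f bj_label_index[OF b] by simp
  next
    case False
    then have "facet_weight s = 0" using facet_weight_bounds[of s] by linarith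
    then have "expand (collapse s) = pole1" using collapse_facet_weight_0 expand_pole2 by simp
    then show ?thesis using homX_f to_wedge_f False from_wedge_zero by simp
  qed
qed

lemma to_wedge_in_wedge_set:
  assumes f: "f \<in> fibre_join E tgt" shows "to_wedge f \<in> wedge_set"
proof -
  have s: "coords f \<in> sphere1" "label_fits (coords f) (label f)"
    using coords_in_sphere1[OF f] fibre_join_eq_join_point(2)[OF f] by auto
  have to_wedge_f: "to_wedge f = (if facet_weight (coords f) > 0
      then wedge_point (label_index (label f)) (collapse (coords f)) else (\<lambda>_. 0))"
    using fibre_join_eq_join_point(1)[OF f] to_wedge_join_point[OF s label_extensional] by simp
  show ?thesis
  proof (cases "facet_weight (coords f) > 0")
    case True
    have "label f \<in> labels" using labels_if_facet_weight_pos[OF s(2) label_extensional True] .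
    then show ?thesis
      using to_wedge_f True wedge_point_in_wedge_set label_index_less collapse_in_sphere2[OF s(1)]
      by simp
  qed (use to_wedge_f zero_in_wedge_set in simp)
qed

lemma from_wedge_in_fibre_join:
  assumes w: "w \<in> wedge_set" shows "from_wedge w \<in> fibre_join E tgt"
proof -
  consider "w = (\<lambda>_. 0)" | i where "i < N" "block w i \<in> sphere2" "w = wedge_point i (block w i)"
    using wedge_set_cases[OF w] by blast
  then show ?thesis
  proof cases
    case 1 then show ?thesis
      using from_wedge_zero join_point_in_fibre_join pole1_in_sphere1 label_fits_pole1 by metis
  next
    case 2
    then have "from_wedge w = join_point (expand (block w i)) (bj i)"
      using from_wedge_wedge_point by metis
    then show ?thesis using join_point_in_fibre_join expand_in_sphere1 2 label_fits_bj by simp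
  qed
qed

lemma homW_in_wedge_set:
  assumes w: "w \<in> wedge_set" and t: "0 \<le> t" "t \<le> 1"
  shows "homW t w \<in> wedge_set"
proof -
  consider "w = (\<lambda>_. 0)" | i where "i < N" "block w i \<in> sphere2" "w = wedge_point i (block w i)"
    using wedge_set_cases[OF w] by blast
  then show ?thesis
  proof cases
    case 1 then show ?thesis using homW_zero[OF t] zero_in_wedge_set by simp
  next
    case 2
    then have "homW t w = wedge_point i (hom2 t (block w i))" using homW_wedge_point t by metis
    then show ?thesis using wedge_point_in_wedge_set hom2_in_sphere2 2 t by simp
  qed
qed

lemma homW_0:
  assumes w: "w \<in> wedge_set" shows "homW 0 w = w"
proof -
  consider "w = (\<lambda>_. 0)" | i where "i < N" "block w i \<in> sphere2" "w = wedge_point i (block w i)"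
    using wedge_set_cases[OF w] by blast
  then show ?thesis
  proof cases
    case 1 then show ?thesis using homW_zero by simp
  next
    case 2
    then have "homW 0 w = wedge_point i (hom2 0 (block w i))" using homW_wedge_point
      by (metis order_refl zero_le_one)
    then show ?thesis using hom2_0 2 by simp
  qed
qed

lemma homW_1:
  assumes w: "w \<in> wedge_set" shows "homW 1 w = to_wedge (from_wedge w)"
proof -
  consider "w = (\<lambda>_. 0)" | i where "i < N" "block w i \<in> sphere2" "w = wedge_point i (block w i)"
    using wedge_set_cases[OF w] by blast
  then show ?thesis
  proof cases
    case 1
    define b0 :: "'v \<Rightarrow> 'e" where "b0 = restrict a U"
    have "to_wedge (join_point pole1 b0) = (\<lambda>_. 0)"
      using to_wedge_join_point[OF pole1_in_sphere1 label_fits_pole1, of b0] facet_weight_pole1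
        unfolding b0_def by simp
    then show ?thesis using 1 homW_zero from_wedge_zero[of b0] by simp
  next
    case 2
    define z where "z = block w i"
    have z: "z \<in> sphere2" "w = wedge_point i z" using 2 unfolding z_def by auto
    have homW_w: "homW 1 w = wedge_point i (collapse (expand z))"
      using homW_wedge_point[OF 2(1) z(1)] hom2_1[OF z(1)] z(2) by simp
    have from_wedge_w: "from_wedge w = join_point (expand z) (bj i)"
      using from_wedge_wedge_point[OF 2(1) z(1)] z(2) by simp
    have bj_ext: "bj i \<in> extensional U" using bj_in_labels[OF 2(1)] unfolding labels_def
      by (simp add: PiE_def)
    have to_wedge_from_wedge: "to_wedge (from_wedge w) = (if facet_weight (expand z) > 0
        then wedge_point (label_index (bj i)) (collapse (expand z)) else (\<lambda>_. 0))"
      using from_wedge_w to_wedge_join_point[OF expand_in_sphere1[OF z(1)] label_fits_bj[OF 2(1)] bj_ext]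
      by simp
    show ?thesis
    proof (cases "facet_weight (expand z) > 0")
      case True then show ?thesis using homW_w to_wedge_from_wedge label_index_bj[OF 2(1)] by simp
    next
      case False
      then have "facet_weight (expand z) = 0" using facet_weight_bounds[of "expand z"] by linarith
      then show ?thesis
        using homW_w to_wedge_from_wedge False collapse_facet_weight_0 wedge_point_pole2 by simp
    qed
  qed
qed

abbreviation join_top where "join_top \<equiv> subtopology (powertop_real UNIV) (fibre_join E tgt)"
abbreviation wedge_top where "wedge_top \<equiv> subtopology (powertop_real UNIV) wedge_set"

lemma continuous_map_branch_mass:
  "continuous_map T join_top g \<Longrightarrow> continuous_map T euclideanreal (\<lambda>x. branch_mass (g x) v)"
  unfolding branch_mass_def
  by (intro continuous_intros continuous_map_coordinate[of T "fibre_join E tgt" g])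
      (simp_all add: finite_fibre)

lemma coordwise_continuous_coords:
  "continuous_map T join_top g \<Longrightarrow> coordwise_continuous T (\<lambda>x. coords (g x))"
  unfolding coords_def
  by (intro coordwise_continuous_restrict continuous_intros continuous_map_branch_mass
      continuous_map_coordinate[of T "fibre_join E tgt" g])

lemma coordwise_continuous_block:
  "continuous_map T wedge_top g \<Longrightarrow> coordwise_continuous T (\<lambda>x. block (g x) j)"
  unfolding block_def
  by (intro coordwise_continuous_restrict continuous_intros
        continuous_map_coordinate[of T wedge_set g])

lemma mass_cutoff_nonzero: "max x mu \<noteq> 0"
  using mu_pos by (smt (verit) max.cobounded2)

lemma continuous_map_to_wedge: "continuous_map join_top wedge_top to_wedge"
proof (rule continuous_map_into_coordinatewise)
  have id: "continuous_map join_top join_top (\<lambda>f. f)" by simp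
  have collapse: "coordwise_continuous join_top (\<lambda>f. collapse (coords f))"
    by (rule coordwise_continuous_collapse[OF coordwise_continuous_coords[OF id]])
      (simp add: coords_in_sphere1)
  fix n
  show "continuous_map join_top euclideanreal (\<lambda>f. to_wedge f n)"
    unfolding to_wedge_def
    by (intro continuous_intros continuous_map_branch_mass[OF id] continuous_map_coordinate[OF id]
        coordwise_continuousD[OF collapse] mass_cutoff_nonzero) (simp_all add: finU)
next
  fix f assume "f \<in> topspace join_top"
  then show "to_wedge f \<in> wedge_set" using to_wedge_in_wedge_set by simp
qed

lemma continuous_map_from_wedge: "continuous_map wedge_top join_top from_wedge"
proof (rule continuous_map_into_coordinatewise)
  have id: "continuous_map wedge_top wedge_top (\<lambda>w. w)" by simp
  have expand: "coordwise_continuous wedge_top (\<lambda>w. expand (block w j))" for j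
    by (rule coordwise_continuous_expand[OF coordwise_continuous_block[OF id]])
      (simp add: block_in_sphere2)
  fix e
  show "continuous_map wedge_top euclideanreal (\<lambda>w. from_wedge w e)"
    unfolding from_wedge_def by (intro continuous_intros coordwise_continuousD[OF expand]) simp_all
next
  fix w assume "w \<in> topspace wedge_top"
  then show "from_wedge w \<in> fibre_join E tgt" using from_wedge_in_fibre_join by simp
qed

abbreviation I01 where "I01 \<equiv> top_of_set {0..1::real}"

lemma continuous_map_fst_real: "continuous_map (prod_topology I01 X) euclideanreal fst"
  using continuous_map_into_fulltopology[OF continuous_map_fst] .

lemma fst_in_unit_interval: "p \<in> topspace (prod_topology I01 X) \<Longrightarrow> 0 \<le> fst p \<and> fst p \<le> 1"
  by (auto simp: topspace_prod_topology)

lemma continuous_map_homX: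
  "continuous_map (prod_topology I01 join_top) join_top (\<lambda>p. homX (fst p) (snd p))"
proof (rule continuous_map_into_coordinatewise)
  let ?T = "prod_topology I01 join_top"
  have snd: "continuous_map ?T join_top snd" by (rule continuous_map_snd)
  have coords: "coordwise_continuous ?T (\<lambda>p. coords (snd p))"
    by (rule coordwise_continuous_coords[OF snd])
  have in_sphere1: "coords (snd p) \<in> sphere1 \<and> 0 \<le> fst p \<and> fst p \<le> 1" if "p \<in> topspace ?T" for p
    using that coords_in_sphere1 fst_in_unit_interval by (auto simp: topspace_prod_topology)
  have scale: "continuous_map ?T euclideanreal (\<lambda>p. hom1_scale (fst p) (coords (snd p)))"
    by (rule continuous_map_hom1_scale[OF continuous_map_fst_real coords])
  have shift: "continuous_map ?T euclideanreal (\<lambda>p. hom1_shift (fst p) (coords (snd p)))"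
    by (rule continuous_map_hom1_shift[OF continuous_map_fst_real coords])
  have raw: "coordwise_continuous ?T (\<lambda>p. hom1_raw (fst p) (coords (snd p)))"
    unfolding hom1_raw_def
    by (intro coordwise_continuous_restrict continuous_intros scale shift
        coordwise_continuousD[OF coords])
  have norm: "continuous_map ?T euclideanreal (\<lambda>p. norm1 (hom1_raw (fst p) (coords (snd p))))"
    by (rule continuous_map_norm1[OF raw])
  have norm_nonzero: "norm1 (hom1_raw (fst p) (coords (snd p))) \<noteq> 0" if "p \<in> topspace ?T" for p
    using norm1_hom1_raw_pos in_sphere1[OF that] by fastforce
  fix e
  show "continuous_map ?T euclideanreal (\<lambda>p. homX (fst p) (snd p) e)"
    unfolding homX_def
    by (intro continuous_intros scale shift norm norm_nonzero
        mass_cutoff_nonzero coordwise_continuousD[OF raw] continuous_map_coordinate[OF snd]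
        continuous_map_branch_mass[OF snd])
next
  fix p assume "p \<in> topspace (prod_topology I01 join_top)"
  then show "homX (fst p) (snd p) \<in> fibre_join E tgt"
    using homX_in_fibre_join fst_in_unit_interval by (auto simp: topspace_prod_topology)
qed

lemma continuous_map_homW:
  "continuous_map (prod_topology I01 wedge_top) wedge_top (\<lambda>p. homW (fst p) (snd p))"
proof (rule continuous_map_into_coordinatewise)
  let ?T = "prod_topology I01 wedge_top"
  have snd: "continuous_map ?T wedge_top snd" by (rule continuous_map_snd)
  have hom2: "coordwise_continuous ?T (\<lambda>p. hom2 (fst p) (block (snd p) j))" for j
    by (rule coordwise_continuous_hom2[OF continuous_map_fst_real coordwise_continuous_block[OF snd]])
      (use block_in_sphere2 fst_in_unit_interval in \<open>auto simp: topspace_prod_topology\<close>)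
  fix n
  show "continuous_map ?T euclideanreal (\<lambda>p. homW (fst p) (snd p) n)"
    unfolding homW_def by (intro continuous_intros coordwise_continuousD[OF hom2]) simp_all
next
  fix p assume "p \<in> topspace (prod_topology I01 wedge_top)"
  then show "homW (fst p) (snd p) \<in> wedge_set"
    using homW_in_wedge_set fst_in_unit_interval by (auto simp: topspace_prod_topology)
qed

theorem join_homotopy_equivalent_wedge: "join_top homotopy_equivalent_space wedge_top"
  unfolding homotopy_equivalent_space_def
proof (intro exI conjI)
  show "continuous_map join_top wedge_top to_wedge" by (rule continuous_map_to_wedge)
  show "continuous_map wedge_top join_top from_wedge" by (rule continuous_map_from_wedge)
  have "homotopic_with (\<lambda>_. True) join_top join_top id (from_wedge \<circ> to_wedge)"
    by (rule homotopic_withI[OF continuous_map_homX]) (simp_all add: homX_0 homX_1)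
  then show "homotopic_with (\<lambda>_. True) join_top join_top (from_wedge \<circ> to_wedge) id"
    by (rule homotopic_with_symD)
  have "homotopic_with (\<lambda>_. True) wedge_top wedge_top id (to_wedge \<circ> from_wedge)"
    by (rule homotopic_withI[OF continuous_map_homW]) (simp_all add: homW_0 homW_1)
  then show "homotopic_with (\<lambda>_. True) wedge_top wedge_top (to_wedge \<circ> from_wedge) id"
    by (rule homotopic_with_symD)
qed

end

lemma fibre_join_homotopy_equivalent_wedge:
  assumes finU: "finite U" and finE: "finite E" and tgtU: "\<And>e. e \<in> E \<Longrightarrow> tgt e \<in> U"
    and surj: "\<And>v. v \<in> U \<Longrightarrow> \<exists>e\<in>E. tgt e = v"
  shows "subtopology (powertop_real UNIV) (fibre_join E tgt) homotopy_equivalent_space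
           wedge_spheres (\<Prod>v\<in>U. card {e\<in>E. tgt e = v} - 1) (int (card U) - 1)"
proof (cases "U = {}")
  case True
  then have "E = {}" using tgtU by blast
  then have "fibre_join E tgt = {}" by (simp add: fibre_join_def)
  moreover have "wedge_spheres_set (\<Prod>v\<in>U. card {e\<in>E. tgt e = v} - 1) (int (card U) - 1) = {}"
    using True by (simp add: wedge_spheres_set_def)
  ultimately show ?thesis
    by (simp add: wedge_spheres_def homeomorphic_imp_homotopy_equivalent_space
        homeomorphic_empty_space_eq)
next
  case False
  obtain pos where pos: "bij_betw pos U {0..<card U}"
    using ex_bij_betw_finite_nat[OF finU] by blast
  define v0 where "v0 = inv_into U pos 0"
  have "0 \<in> pos ` U" using pos False finU by (simp add: bij_betw_def card_gt_0_iff)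
  then have v0: "v0 \<in> U" "pos v0 = 0" unfolding v0_def by (auto intro: inv_into_into f_inv_into_f)
  define a where "a v = (SOME e. e \<in> E \<and> tgt e = v)" for v
  have a: "a v \<in> E \<and> tgt (a v) = v" if "v \<in> U" for v
    unfolding a_def using surj[OF that] by (rule someI2_bex) simp
  define B where "B = PiE U (\<lambda>v. {e\<in>E. tgt e = v} - {a v})"
  have "finite B" unfolding B_def using finU finE by (intro finite_PiE) auto
  then obtain bj where bj: "bij_betw bj {0..<card B} B" using ex_bij_betw_nat_finite by blast
  interpret J: join_collapse U v0 E tgt a "card B" bj pos
    using finU finE tgtU a bj pos v0 unfolding B_def by unfold_locales auto
  have "card B = (\<Prod>v\<in>U. card {e\<in>E. tgt e = v} - 1)"
    unfolding B_def using finU a by (simp add: card_PiE card_Diff_singleton)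
  with J.join_homotopy_equivalent_wedge show ?thesis
    unfolding J.wedge_set_def wedge_spheres_def by simp
qed


section \<open>Directed forests of an acyclic graph\<close>

lemma card_fibres_le_1_iff_inj_on:
  assumes "finite F"
  shows "(\<forall>v. card {e\<in>F. tgt e = v} \<le> 1) \<longleftrightarrow> inj_on tgt F"
  using assms by (auto simp: inj_on_def card_le_Suc0_iff_eq)

lemma directed_forest_of_acyclic:
  assumes "finite E" and "acyclic (edge_rel src tgt E)"
  shows "directed_forest E src tgt F \<longleftrightarrow> F \<subseteq> E \<and> inj_on tgt F"
proof -
  have "acyclic (edge_rel src tgt F)" if "F \<subseteq> E"
    by (rule acyclic_subset[OF assms(2)]) (use that in \<open>auto simp: edge_rel_def\<close>)
  then show ?thesis unfolding directed_forest_def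
    using assms(1) card_fibres_le_1_iff_inj_on[of F tgt] finite_subset by blast
qed

lemma geom_realization_DT_acyclic:
  assumes finE: "finite E" and acyclic: "acyclic (edge_rel src tgt E)"
  shows "geom_realization (DT E src tgt) = subtopology (powertop_real UNIV) (fibre_join E tgt)"
proof -
  have "(\<forall>e. 0 \<le> f e) \<and> {e. f e \<noteq> 0} \<in> DT E src tgt \<and> finite {e. f e \<noteq> 0} \<and>
          sum f {e. f e \<noteq> 0} = 1 \<longleftrightarrow> f \<in> fibre_join E tgt" for f :: "'a \<Rightarrow> real"
  proof (cases "{e. f e \<noteq> 0} \<subseteq> E")
    case True
    then have "sum f {e. f e \<noteq> 0} = sum f E" using finE by (intro sum.mono_neutral_left) auto
    moreover have "inj_on tgt {e. f e \<noteq> 0} \<longleftrightarrow>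
        (\<forall>e\<in>E. \<forall>e'\<in>E. f e \<noteq> 0 \<longrightarrow> f e' \<noteq> 0 \<longrightarrow> tgt e = tgt e' \<longrightarrow> e = e')"
      using True by (auto simp: inj_on_def)
    ultimately show ?thesis
      using True finE finite_subset[OF True]
      by (auto simp: DT_def directed_forest_of_acyclic[OF finE acyclic] fibre_join_def)
  qed (auto simp: DT_def directed_forest_def fibre_join_def)
  then show ?thesis unfolding geom_realization_def
    by (intro arg_cong[where f = "subtopology (powertop_real UNIV)"]) blast
qed

theorem theorem2p12:
  fixes V :: "'v set" and E :: "'e set" and src tgt :: "'e \<Rightarrow> 'v"
  assumes "finite_dag V E src tgt"
  defines "R \<equiv> {v \<in> V. indeg E tgt v = 0}"
  shows "geom_realization (DT E src tgt) homotopy_equivalent_space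
           wedge_spheres (\<Prod>v\<in>V - R. indeg E tgt v - 1) (int (card V) - int (card R) - 1)"
proof -
  have finV: "finite V" and finE: "finite E" and acyclic: "acyclic (edge_rel src tgt E)"
    and tgtV: "\<And>e. e \<in> E \<Longrightarrow> tgt e \<in> V"
    using assms(1) unfolding finite_dag_def by auto
  have indeg_pos: "indeg E tgt v \<noteq> 0 \<longleftrightarrow> (\<exists>e\<in>E. tgt e = v)" for v
    using finE by (auto simp: indeg_def)
  have "int (card V) - int (card R) = int (card (V - R))"
    using finV by (simp add: R_def card_Diff_subset card_mono finite_subset of_nat_diff)
  moreover have "subtopology (powertop_real UNIV) (fibre_join E tgt) homotopy_equivalent_space
      wedge_spheres (\<Prod>v\<in>V - R. indeg E tgt v - 1) (int (card (V - R)) - 1)"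
    unfolding indeg_def
    by (rule fibre_join_homotopy_equivalent_wedge)
      (use finV finE tgtV indeg_pos in \<open>auto simp: R_def indeg_def\<close>)
  ultimately show ?thesis by (simp add: geom_realization_DT_acyclic[OF finE acyclic])
qed

end
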